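(* The eigenvalue problem $-(r\eta')'=r\big(W^1+\beta r^{-2}\big)\eta$ on $(0,\infty)$, $\eta\in\mathcal D_{\mathrm{rad}}$ (in weak sense), with $W^1(r)=\frac{64}{(8+r^2)^2}$, has $\beta=-1$ as its only negative eigenvalue; it is simple and its eigenfunction is $\eta_1(r)=\frac{4r}{8+r^2}$.
   Context: $\mathcal D_{\mathrm{rad}}$ is the space of radial functions $g$ in $D^{1,2}(\mathbb R^2)$ with $\int_0^\infty r^{-1}g^2dr<\infty$, normed by $\int_0^\infty(r|g'|^2+r^{-1}g^2)dr$. Weak solution means $\int_0^\infty r\eta'\varphi'dr=\int_0^\infty r(W^1+\beta r^{-2})\eta\varphi\,dr$ for all $\varphi\in C^\infty_0(0,\infty)$. A negative $\beta$ is an eigenvalue if this problem has a nontrivial solution. *)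

theory Defs
  imports "HOL-Analysis.Analysis"
begin

definition test_fun :: "(real \<Rightarrow> real) \<Rightarrow> bool" where
  "test_fun \<phi> \<longleftrightarrow>
     (\<forall>n x. ((deriv ^^ n) \<phi>) differentiable (at x)) \<and>
     (\<exists>a b. 0 < a \<and> a \<le> b \<and> (\<forall>x. x \<notin> {a..b} \<longrightarrow> \<phi> x = 0))"

text \<open>g' is a weak derivative of g on (0,inf): g is locally absolutely continuous
  with g(b) - g(a) = integral of g' over [a,b].\<close>
definition weak_deriv :: "(real \<Rightarrow> real) \<Rightarrow> (real \<Rightarrow> real) \<Rightarrow> bool" where
  "weak_deriv g g' \<longleftrightarrow>
     (\<forall>a b. 0 < a \<longrightarrow> a \<le> b \<longrightarrow>
        set_integrable lborel {a..b} g' \<and> g b - g a = (LINT t:{a..b}|lborel. g' t))"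

definition Drad :: "(real \<Rightarrow> real) \<Rightarrow> (real \<Rightarrow> real) \<Rightarrow> bool" where
  "Drad g g' \<longleftrightarrow> weak_deriv g g' \<and>
     set_integrable lborel {0<..} (\<lambda>r. r * (g' r)\<^sup>2) \<and>
     set_integrable lborel {0<..} (\<lambda>r. (g r)\<^sup>2 / r)"

definition W1 :: "real \<Rightarrow> real" where
  "W1 r = 64 / (8 + r\<^sup>2)\<^sup>2"

definition weak_solution :: "real \<Rightarrow> (real \<Rightarrow> real) \<Rightarrow> (real \<Rightarrow> real) \<Rightarrow> bool" where
  "weak_solution \<beta> \<eta> \<eta>' \<longleftrightarrow>
     (\<forall>\<phi>. test_fun \<phi> \<longrightarrow>
        (LINT r:{0<..}|lborel. r * \<eta>' r * deriv \<phi> r) =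
        (LINT r:{0<..}|lborel. r * (W1 r + \<beta> / r\<^sup>2) * \<eta> r * \<phi> r))"

definition eigenvalue :: "real \<Rightarrow> bool" where
  "eigenvalue \<beta> \<longleftrightarrow>
     (\<exists>\<eta> \<eta>'. Drad \<eta> \<eta>' \<and> weak_solution \<beta> \<eta> \<eta>' \<and> (\<exists>r>0. \<eta> r \<noteq> 0))"

definition eta1 :: "real \<Rightarrow> real" where
  "eta1 r = 4 * r / (8 + r\<^sup>2)"

end

theory Submission
  imports Defs "HOL-Computational_Algebra.Polynomial" "HOL-Real_Asymp.Real_Asymp"
begin

text \<open>Testing the weak equation with derivatives of test functions shows that \<open>r \<eta>' + H\<close>, where
  \<open>H' = r (W\<^sup>1 + \<beta> r\<^sup>-\<^sup>2) \<eta>\<close>, is almost everywhere constant; hence \<open>\<eta>\<close> is \<open>C\<^sup>1\<close> and solves the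
  first-order system \<open>u' = v / r\<close>, \<open>v' = - r (W\<^sup>1 + \<beta> r\<^sup>-\<^sup>2) u\<close> classically.  After the substitution
  \<open>r = \<surd>8 e\<^sup>s\<close> this is the reflectionless Poeschl--Teller equation \<open>-\<eta>'' = (2 sech\<^sup>2 s + \<beta>) \<eta>\<close>,
  whose solutions for \<open>\<beta> = -\<kappa>\<^sup>2\<close> are spanned by \<open>e\<^sup>\<plusminus>\<^sup>\<kappa>\<^sup>s (tanh s \<mp> \<kappa>)\<close>.  For \<open>\<kappa> \<noteq> 1\<close> every nonzero
  combination is unbounded at \<open>0\<close> or at \<open>\<infinity>\<close>, which is incompatible with \<open>\<integral> \<eta>\<^sup>2 / r < \<infinity>\<close>.  For
  \<open>\<kappa> = 1\<close> the first solution is a multiple of \<open>eta1\<close>, and the second one, obtained by reduction of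
  order, grows linearly at \<open>\<infinity>\<close>.\<close>

section \<open>Smooth functions\<close>

definition differentiable_upto :: "nat \<Rightarrow> (real \<Rightarrow> real) \<Rightarrow> bool" where
  "differentiable_upto n f \<longleftrightarrow> (\<forall>m<n. \<forall>x. (deriv ^^ m) f differentiable (at x))"

definition smooth :: "(real \<Rightarrow> real) \<Rightarrow> bool" where
  "smooth f \<longleftrightarrow> (\<forall>n. differentiable_upto n f)"

lemma differentiable_upto_0 [simp]: "differentiable_upto 0 f"
  by (simp add: differentiable_upto_def)

lemma deriv_funpow_Suc: "(deriv ^^ Suc m) f = (deriv ^^ m) (deriv f)"
  by (simp add: funpow_Suc_right del: funpow.simps)

lemma differentiable_upto_Suc:
  "differentiable_upto (Suc n) f \<longleftrightarrow> (\<forall>x. f differentiable (at x)) \<and> differentiable_upto n (deriv f)"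
proof
  assume a: "differentiable_upto (Suc n) f"
  show "(\<forall>x. f differentiable (at x)) \<and> differentiable_upto n (deriv f)"
    using a[unfolded differentiable_upto_def, rule_format, of 0]
      a[unfolded differentiable_upto_def, rule_format, of "Suc _"]
    by (auto simp: differentiable_upto_def deriv_funpow_Suc simp del: funpow.simps)
next
  assume "(\<forall>x. f differentiable (at x)) \<and> differentiable_upto n (deriv f)"
  then show "differentiable_upto (Suc n) f"
    unfolding differentiable_upto_def
    by (metis deriv_funpow_Suc funpow_0 less_Suc_eq_0_disj not_less_eq)
qed

lemma differentiable_upto_mono: "differentiable_upto n f \<Longrightarrow> m \<le> n \<Longrightarrow> differentiable_upto m f"
  by (auto simp: differentiable_upto_def)

lemma real_field_differentiable_iff:
  "(f :: real \<Rightarrow> real) field_differentiable (at x) \<longleftrightarrow> f differentiable (at x)"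
  using DERIV_deriv_iff_real_differentiable DERIV_deriv_iff_field_differentiable by blast

lemma differentiable_upto_const: "differentiable_upto n (\<lambda>x. c)"
  by (induction n arbitrary: c) (simp_all add: differentiable_upto_Suc)

lemma differentiable_upto_id: "differentiable_upto n (\<lambda>x. x)"
  by (cases n) (simp_all add: differentiable_upto_Suc differentiable_upto_const)

lemma differentiable_upto_add:
  "differentiable_upto n f \<Longrightarrow> differentiable_upto n g \<Longrightarrow> differentiable_upto n (\<lambda>x. f x + g x)"
proof (induction n arbitrary: f g)
  case (Suc n)
  then have "\<And>x. f differentiable (at x)" "\<And>x. g differentiable (at x)"
    by (auto simp: differentiable_upto_Suc)
  then have "deriv (\<lambda>x. f x + g x) = (\<lambda>x. deriv f x + deriv g x)"
    by (auto simp: real_field_differentiable_iff[symmetric])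
  with Suc show ?case by (auto simp: differentiable_upto_Suc)
qed simp

lemma differentiable_upto_cmult: "differentiable_upto n f \<Longrightarrow> differentiable_upto n (\<lambda>x. c * f x)"
proof (induction n arbitrary: f)
  case (Suc n)
  then have "\<And>x. f differentiable (at x)"
    by (auto simp: differentiable_upto_Suc)
  then have "deriv (\<lambda>x. c * f x) = (\<lambda>x. c * deriv f x)"
    by (auto simp: real_field_differentiable_iff[symmetric])
  with Suc show ?case by (auto simp: differentiable_upto_Suc)
qed simp

lemma differentiable_upto_mult:
  "differentiable_upto n f \<Longrightarrow> differentiable_upto n g \<Longrightarrow> differentiable_upto n (\<lambda>x. f x * g x)"
proof (induction n arbitrary: f g)
  case (Suc n)
  then have df: "\<And>x. f differentiable (at x)" and dg: "\<And>x. g differentiable (at x)"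
    by (auto simp: differentiable_upto_Suc)
  have "deriv (\<lambda>x. f x * g x) = (\<lambda>x. f x * deriv g x + deriv f x * g x)"
    using df dg by (auto simp: real_field_differentiable_iff[symmetric])
  moreover have "differentiable_upto n (\<lambda>x. f x * deriv g x + deriv f x * g x)"
    using Suc differentiable_upto_mono[OF Suc.prems(1)] differentiable_upto_mono[OF Suc.prems(2)]
    by (intro differentiable_upto_add Suc.IH) (auto simp: differentiable_upto_Suc)
  ultimately show ?case
    using df dg by (auto simp: differentiable_upto_Suc intro: differentiable_mult)
qed simp

lemma differentiable_upto_inverse:
  "differentiable_upto n f \<Longrightarrow> (\<And>x. f x \<noteq> 0) \<Longrightarrow> differentiable_upto n (\<lambda>x. inverse (f x))"
proof (induction n arbitrary: f)
  case (Suc n)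
  then have df: "\<And>x. f differentiable (at x)"
    by (auto simp: differentiable_upto_Suc)
  have "deriv (\<lambda>x. inverse (f x)) = (\<lambda>x. - deriv f x * (inverse (f x) * inverse (f x)))"
    using df Suc.prems(2) by (auto simp: real_field_differentiable_iff[symmetric] power2_eq_square field_simps)
  moreover have "differentiable_upto n (\<lambda>x. - deriv f x * (inverse (f x) * inverse (f x)))"
    using Suc differentiable_upto_mono[OF Suc.prems(1)]
    by (auto simp: differentiable_upto_Suc
        intro!: differentiable_upto_mult differentiable_upto_cmult[where c = "-1", simplified])
  moreover have "(\<lambda>x. inverse (f x)) differentiable (at x)" for x
    using df Suc.prems(2) by (auto intro!: derivative_intros)
  ultimately show ?case by (auto simp: differentiable_upto_Suc)
qed simp

lemma differentiable_upto_affine: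
  "differentiable_upto n f \<Longrightarrow> differentiable_upto n (\<lambda>x. f (a * x + b))"
proof (induction n arbitrary: f)
  case (Suc n)
  then have df: "\<And>x. f differentiable (at x)"
    by (auto simp: differentiable_upto_Suc)
  have "deriv (\<lambda>x. f (a * x + b)) = (\<lambda>x. a * deriv f (a * x + b))"
    by (rule ext, rule deriv_compose_linear') (simp add: real_field_differentiable_iff df)
  moreover have "(\<lambda>x. f (a * x + b)) differentiable (at x)" for x
    using differentiable_chain_at[of "\<lambda>x. a * x + b" x f] df by (simp add: o_def)
  ultimately show ?case
    using Suc by (auto simp: differentiable_upto_Suc intro: differentiable_upto_cmult)
qed simp

lemma smooth_iff: "smooth f \<longleftrightarrow> (\<forall>n x. (deriv ^^ n) f differentiable (at x))"
  unfolding smooth_def differentiable_upto_def by (meson lessI)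

lemma smooth_const: "smooth (\<lambda>x. c)"
  by (simp add: smooth_def differentiable_upto_const)

lemma smooth_id: "smooth (\<lambda>x. x)"
  by (simp add: smooth_def differentiable_upto_id)

lemma smooth_add: "smooth f \<Longrightarrow> smooth g \<Longrightarrow> smooth (\<lambda>x. f x + g x)"
  by (simp add: smooth_def differentiable_upto_add)

lemma smooth_mult: "smooth f \<Longrightarrow> smooth g \<Longrightarrow> smooth (\<lambda>x. f x * g x)"
  by (simp add: smooth_def differentiable_upto_mult)

lemma smooth_cmult: "smooth f \<Longrightarrow> smooth (\<lambda>x. c * f x)"
  by (simp add: smooth_def differentiable_upto_cmult)

lemma smooth_diff: "smooth f \<Longrightarrow> smooth g \<Longrightarrow> smooth (\<lambda>x. f x - g x)"
  using smooth_add[of f "\<lambda>x. (-1) * g x"] smooth_cmult[of g "-1"] by simp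

lemma smooth_inverse: "smooth f \<Longrightarrow> (\<And>x. f x \<noteq> 0) \<Longrightarrow> smooth (\<lambda>x. inverse (f x))"
  by (simp add: smooth_def differentiable_upto_inverse)

lemma smooth_affine: "smooth f \<Longrightarrow> smooth (\<lambda>x. f (a * x + b))"
  by (simp add: smooth_def differentiable_upto_affine)

lemma smooth_differentiable: "smooth f \<Longrightarrow> f differentiable (at x)"
  unfolding smooth_iff by (metis funpow_0)

lemma smooth_continuous_on: "smooth f \<Longrightarrow> continuous_on S f"
  by (rule continuous_at_imp_continuous_on)
     (auto intro: differentiable_imp_continuous_within smooth_differentiable)

definition flat_exp :: "real \<Rightarrow> real" where
  "flat_exp x = (if x > 0 then exp (- inverse x) else 0)"

fun flat_exp_poly :: "nat \<Rightarrow> real poly" where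
  "flat_exp_poly 0 = 1"
| "flat_exp_poly (Suc n) = monom 1 2 * (flat_exp_poly n - pderiv (flat_exp_poly n))"

definition flat_exp_deriv :: "nat \<Rightarrow> real \<Rightarrow> real" where
  "flat_exp_deriv n x =
     (if x > 0 then poly (flat_exp_poly n) (inverse x) * exp (- inverse x) else 0)"

lemma poly_times_exp_at_right_0:
  "((\<lambda>x. poly p (inverse x) * exp (- inverse x)) \<longlongrightarrow> (0::real)) (at_right 0)"
proof -
  have "((\<lambda>y. \<Sum>i\<le>degree p. coeff p i * (y ^ i / exp y)) \<longlongrightarrow> (\<Sum>i\<le>degree p. coeff p i * 0)) at_top"
    by (intro tendsto_sum tendsto_mult tendsto_const tendsto_power_div_exp_0)
  then have "((\<lambda>y. poly p y * exp (- y)) \<longlongrightarrow> (0::real)) at_top"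
    by (simp add: poly_altdef exp_minus divide_inverse sum_distrib_right mult.assoc)
  from filterlim_compose[OF this filterlim_inverse_at_top_right] show ?thesis
    by (simp add: o_def)
qed

lemma flat_exp_deriv_pos:
  assumes "x > 0"
  shows "(flat_exp_deriv n has_real_derivative flat_exp_deriv (Suc n) x) (at x)"
proof -
  let ?p = "flat_exp_poly n"
  have "((\<lambda>x. poly ?p (inverse x) * exp (- inverse x)) has_real_derivative
        poly (pderiv ?p) (inverse x) * (- (inverse x * inverse x)) * exp (- inverse x)
         + poly ?p (inverse x) * (exp (- inverse x) * (inverse x * inverse x))) (at x)"
    using assms
    by (auto intro!: derivative_eq_intros DERIV_chain2[OF poly_DERIV] simp: power2_eq_square)
  moreover have "poly (pderiv ?p) (inverse x) * (- (inverse x * inverse x)) * exp (- inverse x)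
         + poly ?p (inverse x) * (exp (- inverse x) * (inverse x * inverse x))
       = flat_exp_deriv (Suc n) x"
    using assms by (simp add: flat_exp_deriv_def poly_monom algebra_simps power2_eq_square)
  ultimately have "((\<lambda>x. poly ?p (inverse x) * exp (- inverse x)) has_real_derivative
      flat_exp_deriv (Suc n) x) (at x)"
    by simp
  then show ?thesis
    by (rule has_field_derivative_transform_within_open[of _ _ _ "{0<..}"])
       (use assms in \<open>auto simp: flat_exp_deriv_def\<close>)
qed

lemma flat_exp_deriv_neg:
  assumes "x < 0"
  shows "(flat_exp_deriv n has_real_derivative flat_exp_deriv (Suc n) x) (at x)"
proof (rule has_field_derivative_transform_within_open[of "\<lambda>_. 0" _ _ "{..<0}"])
  show "((\<lambda>_. 0) has_real_derivative flat_exp_deriv (Suc n) x) (at x)"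
    using assms by (simp add: flat_exp_deriv_def)
qed (use assms in \<open>auto simp: flat_exp_deriv_def\<close>)

text \<open>At the origin both one-sided difference quotients vanish: on the right the quotient is
  again a polynomial in \<open>1/x\<close> times \<open>exp (-1/x)\<close>.\<close>
lemma flat_exp_deriv_0: "(flat_exp_deriv n has_real_derivative flat_exp_deriv (Suc n) 0) (at 0)"
proof -
  let ?q = "\<lambda>y. (flat_exp_deriv n y - flat_exp_deriv n 0) / (y - 0)"
  have "\<forall>\<^sub>F y in at_right 0.
      poly (pCons 0 (flat_exp_poly n)) (inverse y) * exp (- inverse y) = ?q y"
    by (rule eventually_mono[OF eventually_at_right_less]) (simp add: flat_exp_deriv_def field_simps)
  with poly_times_exp_at_right_0 have "(?q \<longlongrightarrow> 0) (at_right 0)"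
    by (rule Lim_transform_eventually)
  moreover have "(?q \<longlongrightarrow> 0) (at_left 0)"
    by (rule tendsto_eventually)
       (auto simp: flat_exp_deriv_def intro!: eventually_at_leftI[of "-1"])
  ultimately show ?thesis
    by (simp add: has_field_derivative_iff flat_exp_deriv_def filterlim_at_split)
qed

lemma flat_exp_deriv_has_derivative:
  "(flat_exp_deriv n has_real_derivative flat_exp_deriv (Suc n) x) (at x)"
  using flat_exp_deriv_pos flat_exp_deriv_neg flat_exp_deriv_0
  by (cases x "0::real" rule: linorder_cases) auto

lemma deriv_funpow_flat_exp: "(deriv ^^ n) flat_exp = flat_exp_deriv n"
proof (induction n)
  case 0
  then show ?case by (auto simp: flat_exp_deriv_def flat_exp_def)
next
  case (Suc n)
  then show ?case
    by (auto intro!: DERIV_imp_deriv flat_exp_deriv_has_derivative)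
qed

lemma smooth_flat_exp: "smooth flat_exp"
  unfolding smooth_iff deriv_funpow_flat_exp
  using flat_exp_deriv_has_derivative real_differentiable_def by blast

lemma smooth_flat_exp_affine: "smooth (\<lambda>t. flat_exp (a * t + b))"
  by (rule smooth_affine[OF smooth_flat_exp])

lemma flat_exp_nonneg: "0 \<le> flat_exp x"
  by (simp add: flat_exp_def)

lemma flat_exp_le_1: "flat_exp x \<le> 1"
  by (simp add: flat_exp_def)

lemma flat_exp_pos: "0 < x \<Longrightarrow> 0 < flat_exp x"
  by (simp add: flat_exp_def)

lemma flat_exp_eq_0: "x \<le> 0 \<Longrightarrow> flat_exp x = 0"
  by (simp add: flat_exp_def)

section \<open>Test functions and cutoffs\<close>

lemma integral_superinterval_eq:
  fixes f :: "real \<Rightarrow> real"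
  assumes f: "f integrable_on {A..B}" and le: "A \<le> a" "a \<le> b" "b \<le> B"
    and vanish: "\<And>x. x \<in> {A..B} \<Longrightarrow> x \<notin> {a<..<b} \<Longrightarrow> f x = 0"
  shows "integral {A..B} f = integral {a..b} f"
proof -
  have f': "f integrable_on {a..B}"
    by (rule integrable_subinterval_real[OF f]) (use le in auto)
  have "integral {A..B} f = integral {A..a} f + (integral {a..b} f + integral {b..B} f)"
    using le f f' by (simp add: Henstock_Kurzweil_Integration.integral_combine)
  moreover have "integral {A..a} f = 0" "integral {b..B} f = 0"
    using le vanish by (auto intro!: integral_unique has_integral_is_0)
  ultimately show ?thesis by simp
qed

lemma integral_from_has_real_derivative:
  fixes \<psi> :: "real \<Rightarrow> real"
  assumes "continuous_on {c..} \<psi>" "c < x"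
  shows "((\<lambda>u. integral {c..u} \<psi>) has_real_derivative \<psi> x) (at x)"
proof -
  have "((\<lambda>u. integral {c..u} \<psi>) has_real_derivative \<psi> x) (at x within {c..x+1})"
    using assms by (intro integral_has_real_derivative) (auto intro: continuous_on_subset)
  then have "((\<lambda>u. integral {c..u} \<psi>) has_real_derivative \<psi> x) (at x within {c<..<x+1})"
    by (rule DERIV_subset) auto
  moreover have "at x within {c<..<x+1} = at x"
    using assms by (intro at_within_open) auto
  ultimately show ?thesis by simp
qed

text \<open>The mean-zero condition makes the antiderivative vanish again to the right of \<open>b\<close>.\<close>
lemma
  fixes \<psi> :: "real \<Rightarrow> real"
  assumes smooth: "smooth \<psi>" and ab: "0 < a" "a \<le> b"
    and vanish: "\<And>x. x \<notin> {a<..<b} \<Longrightarrow> \<psi> x = 0" and mean_zero: "integral {a..b} \<psi> = 0"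
  shows antiderivative_vanishes: "\<And>x. x \<notin> {a<..<b} \<Longrightarrow> integral {0..x} \<psi> = 0"
    and antiderivative_has_derivative: "\<And>x. ((\<lambda>x. integral {0..x} \<psi>) has_real_derivative \<psi> x) (at x)"
    and test_fun_antiderivative: "test_fun (\<lambda>x. integral {0..x} \<psi>)"
proof -
  let ?\<phi> = "\<lambda>x. integral {0..x} \<psi>"
  have cont: "continuous_on S \<psi>" for S
    using smooth by (rule smooth_continuous_on)
  have low: "?\<phi> x = 0" if "x \<le> a" for x
    using that vanish by (auto intro!: integral_unique has_integral_is_0)
  have "?\<phi> x = integral {a..b} \<psi>" if "b \<le> x" for x
    using that ab vanish by (intro integral_superinterval_eq integrable_continuous_interval cont) auto
  with low mean_zero show vanishes: "\<And>x. x \<notin> {a<..<b} \<Longrightarrow> ?\<phi> x = 0"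
    by force
  show deriv: "(?\<phi> has_real_derivative \<psi> x) (at x)" for x
  proof (cases "x < a")
    case True
    show ?thesis
    proof (rule has_field_derivative_transform_within_open[of "\<lambda>_. 0" _ _ "{..<a}"])
      show "((\<lambda>_. 0) has_real_derivative \<psi> x) (at x)"
        using True vanish by simp
    qed (use True low in auto)
  next
    case False
    with ab show ?thesis
      by (intro integral_from_has_real_derivative cont) auto
  qed
  then have "deriv ?\<phi> = \<psi>"
    by (auto intro!: DERIV_imp_deriv)
  then have "(deriv ^^ n) ?\<phi> differentiable (at x)" for n x
    using smooth deriv real_differentiable_def unfolding smooth_iff
    by (cases n) (auto simp only: deriv_funpow_Suc funpow_0)
  moreover have "\<forall>x. x \<notin> {a..b} \<longrightarrow> ?\<phi> x = 0"
    using vanishes by auto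
  ultimately show "test_fun ?\<phi>"
    unfolding test_fun_def using ab by blast
qed

lemma test_funE:
  assumes "test_fun \<phi>"
  obtains a b where "0 < a" "a \<le> b" "\<And>x. x \<notin> {a..b} \<Longrightarrow> \<phi> x = 0"
    "\<And>x. x \<notin> {a..b} \<Longrightarrow> deriv \<phi> x = 0"
    "\<And>x. (\<phi> has_real_derivative deriv \<phi> x) (at x)"
    "continuous_on UNIV \<phi>" "continuous_on UNIV (deriv \<phi>)"
proof -
  obtain a b where ab: "0 < a" "a \<le> b" and vanish: "\<And>x. x \<notin> {a..b} \<Longrightarrow> \<phi> x = 0"
    using assms unfolding test_fun_def by blast
  have "(deriv ^^ 0) \<phi> differentiable (at x)" "(deriv ^^ 1) \<phi> differentiable (at x)" for x
    using assms unfolding test_fun_def by blast+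
  then have d: "\<phi> differentiable (at x)" "deriv \<phi> differentiable (at x)" for x
    by simp_all
  have "deriv \<phi> x = 0" if "x \<notin> {a..b}" for x
  proof (rule DERIV_imp_deriv, rule has_field_derivative_transform_within_open[of _ _ _ "- {a..b}"])
    show "((\<lambda>_. 0) has_real_derivative 0) (at x)" by simp
  qed (use that vanish in auto)
  moreover have "continuous_on UNIV \<phi>" "continuous_on UNIV (deriv \<phi>)"
    using d by (auto intro!: continuous_at_imp_continuous_on differentiable_imp_continuous_within)
  ultimately show ?thesis
    using that ab vanish d by (simp add: DERIV_deriv_iff_real_differentiable)
qed

definition cutoff :: "real \<Rightarrow> real \<Rightarrow> nat \<Rightarrow> real \<Rightarrow> real" where
  "cutoff x y n t = flat_exp (real (Suc n) * (t - x)) * flat_exp (real (Suc n) * (y - t))"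

lemma smooth_cutoff: "smooth (cutoff x y n)"
proof -
  have "smooth (\<lambda>t. flat_exp (real (Suc n) * t + - (real (Suc n) * x)) * flat_exp (- real (Suc n) * t + real (Suc n) * y))"
    by (intro smooth_mult smooth_flat_exp_affine)
  then show ?thesis
    unfolding cutoff_def[abs_def] by (simp add: algebra_simps)
qed

lemma cutoff_eq_0:
  assumes "t \<notin> {x<..<y}"
  shows "cutoff x y n t = 0"
proof -
  from assms have "real (Suc n) * (t - x) \<le> 0 \<or> real (Suc n) * (y - t) \<le> 0"
    by (auto simp: mult_nonneg_nonpos)
  then show ?thesis
    by (auto simp: cutoff_def flat_exp_eq_0)
qed

lemma cutoff_pos: "t \<in> {x<..<y} \<Longrightarrow> 0 < cutoff x y n t"
  by (simp add: cutoff_def flat_exp_pos)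

lemma abs_cutoff_le_1: "\<bar>cutoff x y n t\<bar> \<le> 1"
  unfolding cutoff_def
  by (simp add: abs_mult flat_exp_nonneg flat_exp_le_1 mult_le_one)

lemma LIMSEQ_cutoff:
  assumes "t \<in> {x<..<y}"
  shows "(\<lambda>n. cutoff x y n t) \<longlonglongrightarrow> 1"
proof -
  have "(\<lambda>n. flat_exp (real (Suc n) * s)) \<longlonglongrightarrow> 1" if "0 < s" for s
  proof -
    have "(\<lambda>n. exp (- (inverse (real (Suc n)) * inverse s))) \<longlonglongrightarrow> exp (- (0 * inverse s))"
      by (intro tendsto_intros LIMSEQ_inverse_real_of_nat)
    with that show ?thesis
      by (simp add: flat_exp_def)
  qed
  with assms have "(\<lambda>n. flat_exp (real (Suc n) * (t - x)) * flat_exp (real (Suc n) * (y - t)))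
      \<longlonglongrightarrow> 1 * 1"
    by (intro tendsto_mult) auto
  then show ?thesis
    by (simp add: cutoff_def)
qed

lemma integral_cutoff_tendsto:
  fixes f :: "real \<Rightarrow> real"
  assumes f: "f integrable_on {x..y}" "(\<lambda>r. \<bar>f r\<bar>) integrable_on {x..y}"
    and cf: "\<And>n. (\<lambda>r. cutoff x y n r * f r) integrable_on {x..y}"
  shows "(\<lambda>n. integral {x..y} (\<lambda>r. cutoff x y n r * f r)) \<longlonglongrightarrow> integral {x..y} f"
proof -
  define g where "g r = (if r \<in> {x<..<y} then f r else 0)" for r
  have "(\<lambda>n. integral {x..y} (\<lambda>r. cutoff x y n r * f r)) \<longlonglongrightarrow> integral {x..y} g"
  proof (rule dominated_convergence(2)[OF cf f(2)])
    show "norm (cutoff x y n r * f r) \<le> \<bar>f r\<bar>" for n r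
      using abs_cutoff_le_1 by (simp add: abs_mult mult_left_le_one_le)
    show "(\<lambda>n. cutoff x y n r * f r) \<longlonglongrightarrow> g r" for r
    proof (cases "r \<in> {x<..<y}")
      case True
      then show ?thesis
        using tendsto_mult[OF LIMSEQ_cutoff[OF True] tendsto_const[of "f r"]] by (simp add: g_def)
    next
      case False
      then show ?thesis by (simp add: g_def cutoff_eq_0 del: greaterThanLessThan_iff)
    qed
  qed
  moreover have "integral {x..y} g = integral {x..y} f"
    by (rule integral_spike[of "{x, y}"]) (auto simp: g_def)
  ultimately show ?thesis by simp
qed

text \<open>For \<open>x > 0\<close> this is smooth, positive everywhere and the identity on \<open>[x, \<infinity>)\<close>: dividing a
  cutoff supported in \<open>(x, y)\<close> by it gives a smooth version of \<open>cutoff / t\<close>.\<close>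
definition id_above :: "real \<Rightarrow> real \<Rightarrow> real" where
  "id_above x t = t + exp (inverse x) * flat_exp (x - t) * (x - t + 1)"

lemma id_above_eq: "x \<le> t \<Longrightarrow> id_above x t = t"
  by (simp add: id_above_def flat_exp_eq_0)

lemma id_above_pos:
  assumes x: "0 < x"
  shows "0 < id_above x t"
proof (cases "0 < t")
  case True
  show ?thesis
  proof (cases "x \<le> t")
    case False
    then have "0 \<le> exp (inverse x) * flat_exp (x - t) * (x - t + 1)"
      by (simp add: flat_exp_nonneg)
    with \<open>0 < t\<close> show ?thesis
      by (simp add: id_above_def)
  qed (use True in \<open>simp add: id_above_eq\<close>)
next
  case False
  with x have "exp (- inverse (x - t)) \<ge> exp (- inverse x)"
    by (simp add: le_imp_inverse_le)
  with x False have "1 \<le> exp (inverse x) * flat_exp (x - t)"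
    by (simp add: flat_exp_def exp_minus field_simps)
  from mult_right_mono[OF this, of "x - t + 1"] False x
  have "x - t + 1 \<le> exp (inverse x) * flat_exp (x - t) * (x - t + 1)"
    by simp
  with x show ?thesis
    unfolding id_above_def by linarith
qed

lemma smooth_id_above: "smooth (id_above x)"
proof -
  have "smooth (\<lambda>t. t + exp (inverse x) * (flat_exp ((-1) * t + x) * (x - t + 1)))"
    by (intro smooth_add smooth_id smooth_cmult smooth_mult smooth_flat_exp_affine smooth_diff
        smooth_const)
  then show ?thesis
    unfolding id_above_def[abs_def] by (simp add: mult.assoc)
qed

definition cutoff_div :: "real \<Rightarrow> real \<Rightarrow> nat \<Rightarrow> real \<Rightarrow> real" where
  "cutoff_div x y n t = cutoff x y n t / id_above x t"

lemma smooth_cutoff_div: "0 < x \<Longrightarrow> smooth (cutoff_div x y n)"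
  unfolding cutoff_div_def[abs_def] divide_inverse
  by (intro smooth_mult smooth_cutoff smooth_inverse smooth_id_above) (metis id_above_pos less_irrefl)

lemma cutoff_div_eq_0: "t \<notin> {x<..<y} \<Longrightarrow> cutoff_div x y n t = 0"
  by (simp add: cutoff_div_def cutoff_eq_0)

lemma cutoff_div_eq: "x \<le> t \<Longrightarrow> cutoff_div x y n t = cutoff x y n t / t"
  by (simp add: cutoff_div_def id_above_eq)

section \<open>Regularity of weak solutions\<close>

lemma set_integrable_continuous_mult:
  fixes f g :: "real \<Rightarrow> real"
  assumes f: "set_integrable lborel {a..b} f" and g: "continuous_on {a..b} g"
  shows "set_integrable lborel {a..b} (\<lambda>r. g r * f r)"
proof -
  obtain M where M: "\<And>r. r \<in> {a..b} \<Longrightarrow> \<bar>g r\<bar> \<le> M"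
    using compact_imp_bounded[OF compact_continuous_image[OF g]]
    by (metis bounded_real compact_Icc image_eqI)
  show ?thesis
  proof (rule set_integrable_bound[where f = "\<lambda>r. M * f r"])
    show "set_integrable lborel {a..b} (\<lambda>r. M * f r)"
      using f by simp
    have "(\<lambda>x. indicator {a..b} x *\<^sub>R f x) \<in> borel_measurable lborel"
      using f unfolding set_integrable_def by (rule borel_measurable_integrable)
    moreover have "(\<lambda>x. indicator {a..b} x *\<^sub>R g x) \<in> borel_measurable lborel"
      using borel_measurable_continuous_on_indicator[OF _ g] by simp
    ultimately have "(\<lambda>x. (indicator {a..b} x *\<^sub>R g x) * (indicator {a..b} x *\<^sub>R f x))
        \<in> borel_measurable lborel"
      by measurable
    then show "set_borel_measurable lborel {a..b} (\<lambda>r. g r * f r)"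
      unfolding set_borel_measurable_def by (rule measurable_cong[THEN iffD1, rotated])
        (simp add: indicator_def)
    show "AE x in lborel. x \<in> {a..b} \<longrightarrow> norm (g x * f x) \<le> norm (M * f x)"
    proof (intro AE_I2 impI)
      fix x assume "x \<in> {a..b}"
      then have "\<bar>g x\<bar> \<le> \<bar>M\<bar>"
        using M[of x] by linarith
      then show "norm (g x * f x) \<le> norm (M * f x)"
        by (simp add: abs_mult mult_right_mono)
    qed
  qed
qed

lemma set_integral_pos_eq_integral:
  fixes f g :: "real \<Rightarrow> real"
  assumes g: "set_integrable lborel {a..b} g" and a: "0 < a"
    and eq: "\<And>r. r \<in> {a..b} \<Longrightarrow> f r = g r" and vanish: "\<And>r. 0 < r \<Longrightarrow> r \<notin> {a..b} \<Longrightarrow> f r = 0"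
  shows "(LINT r:{0<..}|lborel. f r) = integral {a..b} g"
proof -
  have "(\<lambda>r. indicator {0<..} r *\<^sub>R f r) = (\<lambda>r. indicator {a..b} r *\<^sub>R g r)"
    using a eq vanish by (auto simp: indicator_def fun_eq_iff)
  then show ?thesis
    using set_borel_integral_eq_integral(2)[OF g] by (simp add: set_lebesgue_integral_def)
qed

lemma integral_by_parts_vanishing:
  fixes F f \<phi> \<phi>' :: "real \<Rightarrow> real"
  assumes "a \<le> b"
    and F: "\<And>r. r \<in> {a..b} \<Longrightarrow> (F has_real_derivative f r) (at r)" "continuous_on {a..b} f"
    and \<phi>: "\<And>r. r \<in> {a..b} \<Longrightarrow> (\<phi> has_real_derivative \<phi>' r) (at r)" "continuous_on {a..b} \<phi>'"
    and ends: "\<phi> a = 0" "\<phi> b = 0"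
  shows "integral {a..b} (\<lambda>r. \<phi>' r * F r) = - integral {a..b} (\<lambda>r. \<phi> r * f r)"
proof -
  have cont: "continuous_on {a..b} \<phi>" "continuous_on {a..b} F"
    using F(1) \<phi>(1) by (metis DERIV_isCont continuous_at_imp_continuous_on)+
  have "((\<lambda>r. \<phi>' r * F r) has_integral (- integral {a..b} (\<lambda>r. \<phi> r * f r))) {a..b}"
  proof (rule integration_by_parts[OF bounded_bilinear_mult \<open>a \<le> b\<close> cont])
    show "(\<phi> has_vector_derivative \<phi>' r) (at r)" "(F has_vector_derivative f r) (at r)"
      if "r \<in> {a..b}" for r
      using F(1) \<phi>(1) that by (simp_all add: has_real_derivative_iff_has_vector_derivative)
    have "((\<lambda>r. \<phi> r * f r) has_integral integral {a..b} (\<lambda>r. \<phi> r * f r)) {a..b}"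
      using F(2) cont(1) by (intro integrable_integral integrable_continuous_interval continuous_intros)
    with ends show "((\<lambda>r. \<phi> r * f r) has_integral
        \<phi> b * F b - \<phi> a * F a - - integral {a..b} (\<lambda>r. \<phi> r * f r)) {a..b}"
      by simp
  qed
  then show ?thesis
    by (rule integral_unique)
qed

lemma isCont_pos_imp_continuous_on:
  assumes "\<And>r. 0 < r \<Longrightarrow> isCont f r" "0 < (a::real)"
  shows "continuous_on {a..b} f"
  using assms by (intro continuous_at_imp_continuous_on ballI) auto

definition radial_system :: "(real \<Rightarrow> real) \<Rightarrow> (real \<Rightarrow> real) \<Rightarrow> (real \<Rightarrow> real) \<Rightarrow> bool" where
  "radial_system q u v \<longleftrightarrow> (\<forall>r>0. (u has_real_derivative v r / r) (at r) \<and>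
      (v has_real_derivative - (q r * u r)) (at r))"

text \<open>In the application \<open>q r = r (W\<^sup>1 r + \<beta> / r\<^sup>2)\<close>; only the continuity of \<open>q\<close> on \<open>(0, \<infinity>)\<close>
  is used.\<close>
locale radial_weak_solution =
  fixes q \<eta> \<eta>' :: "real \<Rightarrow> real"
  assumes weak_deriv: "weak_deriv \<eta> \<eta>'"
    and isCont_q: "\<And>r. 0 < r \<Longrightarrow> isCont q r"
    and weak_equation: "\<And>\<phi>. test_fun \<phi> \<Longrightarrow>
      (LINT r:{0<..}|lborel. r * \<eta>' r * deriv \<phi> r) = (LINT r:{0<..}|lborel. q r * \<eta> r * \<phi> r)"
begin

lemma set_integrable_deriv: "0 < a \<Longrightarrow> set_integrable lborel {a..b} \<eta>'"
  using weak_deriv unfolding weak_deriv_def by (cases "a \<le> b") auto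

lemma integrable_on_deriv: "0 < a \<Longrightarrow> \<eta>' integrable_on {a..b}"
  using set_borel_integral_eq_integral(1)[OF set_integrable_deriv] .

lemma solution_diff_eq_integral: "0 < a \<Longrightarrow> a \<le> b \<Longrightarrow> \<eta> b - \<eta> a = integral {a..b} \<eta>'"
  using weak_deriv set_borel_integral_eq_integral(2)[OF set_integrable_deriv]
  unfolding weak_deriv_def by auto

lemma isCont_solution:
  assumes "0 < r"
  shows "isCont \<eta> r"
proof -
  let ?a = "r/2" and ?b = "r+1"
  have "continuous_on {?a..?b} (\<lambda>t. \<eta> ?a + integral {?a..t} \<eta>')"
    using assms by (intro continuous_intros indefinite_integral_continuous_1 integrable_on_deriv) auto
  moreover have "\<eta> ?a + integral {?a..t} \<eta>' = \<eta> t" if "t \<in> {?a..?b}" for t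
    using assms that solution_diff_eq_integral[of ?a t] by auto
  ultimately have "continuous_on {?a..?b} \<eta>"
    by (metis (no_types, lifting) continuous_on_cong)
  then show ?thesis
    by (rule continuous_on_interior) (use assms in auto)
qed

definition primitive :: "real \<Rightarrow> real" where
  "primitive = (SOME H. \<forall>r::real. 0 < r \<longrightarrow> (H has_real_derivative q r * \<eta> r) (at r))"

lemma primitive_has_derivative:
  assumes "0 < r"
  shows "(primitive has_real_derivative q r * \<eta> r) (at r)"
proof -
  have "\<exists>H. \<forall>r::real. ereal 0 < r \<longrightarrow> r < \<infinity> \<longrightarrow> (H has_vector_derivative q r * \<eta> r) (at r)"
    using isCont_q isCont_solution by (intro einterval_antiderivative) (auto intro: continuous_intros)
  then have "\<exists>H. \<forall>r::real. 0 < r \<longrightarrow> (H has_real_derivative q r * \<eta> r) (at r)"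
    by (simp add: has_real_derivative_iff_has_vector_derivative)
  from someI_ex[OF this] assms show ?thesis
    unfolding primitive_def by blast
qed

lemma isCont_primitive: "0 < r \<Longrightarrow> isCont primitive r"
  using primitive_has_derivative DERIV_isCont by blast

definition first_integral :: "real \<Rightarrow> real" where
  "first_integral r = r * \<eta>' r + primitive r"

lemma set_integrable_flux_mult:
  assumes "continuous_on {a..b} g" "0 < a"
  shows "set_integrable lborel {a..b} (\<lambda>r. r * \<eta>' r * g r)"
proof -
  have "set_integrable lborel {a..b} (\<lambda>r. (r * g r) * \<eta>' r)"
    using assms by (intro set_integrable_continuous_mult set_integrable_deriv continuous_intros)
  then show ?thesis
    by (simp add: mult_ac)
qed

lemma integral_first_integral_mult_split:
  assumes "continuous_on {a..b} g" "0 < a"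
  shows "integral {a..b} (\<lambda>r. first_integral r * g r)
    = integral {a..b} (\<lambda>r. r * \<eta>' r * g r) + integral {a..b} (\<lambda>r. g r * primitive r)"
proof -
  have "(\<lambda>r. r * \<eta>' r * g r) integrable_on {a..b}"
    using set_borel_integral_eq_integral(1)[OF set_integrable_flux_mult[OF assms]] .
  moreover have "(\<lambda>r. g r * primitive r) integrable_on {a..b}"
    using assms isCont_pos_imp_continuous_on[OF isCont_primitive]
    by (intro integrable_continuous_interval continuous_intros) auto
  moreover have "(\<lambda>r. first_integral r * g r) = (\<lambda>r. r * \<eta>' r * g r + g r * primitive r)"
    by (simp add: fun_eq_iff first_integral_def algebra_simps)
  ultimately show ?thesis
    by (simp add: integral_add)
qed

lemma set_integrable_first_integral_mult:
  assumes "continuous_on {a..b} g" "0 < a"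
  shows "set_integrable lborel {a..b} (\<lambda>r. first_integral r * g r)"
proof -
  have "set_integrable lborel {a..b} (\<lambda>r. r * \<eta>' r * g r + primitive r * g r)"
    using assms isCont_pos_imp_continuous_on[OF isCont_primitive]
    by (intro set_integral_add set_integrable_flux_mult borel_integrable_atLeastAtMost'
        continuous_intros) auto
  then show ?thesis
    by (simp add: first_integral_def algebra_simps)
qed

lemma integrable_on_first_integral_mult:
  "continuous_on {a..b} g \<Longrightarrow> 0 < a \<Longrightarrow> (\<lambda>r. first_integral r * g r) integrable_on {a..b}"
  using set_integrable_first_integral_mult set_borel_integral_eq_integral(1) by blast

lemma integral_first_integral_restrict:
  assumes "continuous_on {A..B} g" "\<And>r. r \<notin> {x<..<y} \<Longrightarrow> g r = 0"
    and "0 < A" "A \<le> x" "x \<le> y" "y \<le> B"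
  shows "integral {A..B} (\<lambda>r. first_integral r * g r) = integral {x..y} (\<lambda>r. first_integral r * g r)"
  using assms by (intro integral_superinterval_eq integrable_on_first_integral_mult) auto

text \<open>Testing the weak equation with \<open>\<phi> = \<integral>\<^sub>0\<^sup>x \<psi>\<close> and integrating the potential term by
  parts shows that the first integral is orthogonal to every mean-zero \<open>\<psi>\<close>.\<close>
lemma integral_first_integral_mean_zero:
  fixes \<psi> :: "real \<Rightarrow> real"
  assumes smooth: "smooth \<psi>" and ab: "0 < a" "a \<le> b"
    and vanish: "\<And>x. x \<notin> {a<..<b} \<Longrightarrow> \<psi> x = 0" and mean_zero: "integral {a..b} \<psi> = 0"
  shows "integral {a..b} (\<lambda>r. first_integral r * \<psi> r) = 0"
proof -
  define \<phi> where "\<phi> x = integral {0..x} \<psi>" for x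
  have \<phi>: "test_fun \<phi>" "\<And>x. (\<phi> has_real_derivative \<psi> x) (at x)" "\<And>x. x \<notin> {a<..<b} \<Longrightarrow> \<phi> x = 0"
    using test_fun_antiderivative[OF assms] antiderivative_has_derivative[OF assms]
      antiderivative_vanishes[OF assms]
    unfolding \<phi>_def[abs_def] by auto
  then have "deriv \<phi> = \<psi>"
    by (auto intro!: DERIV_imp_deriv)
  with weak_equation[OF \<phi>(1)] have weak:
    "(LINT r:{0<..}|lborel. r * \<eta>' r * \<psi> r) = (LINT r:{0<..}|lborel. q r * \<eta> r * \<phi> r)"
    by simp
  have cont: "continuous_on S \<psi>" "continuous_on S \<phi>" for S
    using smooth_continuous_on[OF smooth] \<phi>(2)
    by (auto intro!: continuous_at_imp_continuous_on DERIV_isCont)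
  have cont_q\<eta>: "continuous_on {a..b} (\<lambda>r. q r * \<eta> r)"
    using ab isCont_pos_imp_continuous_on[OF isCont_q] isCont_pos_imp_continuous_on[OF isCont_solution]
    by (intro continuous_intros) auto
  have "(LINT r:{0<..}|lborel. r * \<eta>' r * \<psi> r) = integral {a..b} (\<lambda>r. r * \<eta>' r * \<psi> r)"
    using ab vanish by (intro set_integral_pos_eq_integral set_integrable_flux_mult cont) auto
  moreover have "(LINT r:{0<..}|lborel. q r * \<eta> r * \<phi> r) = integral {a..b} (\<lambda>r. \<phi> r * (q r * \<eta> r))"
    using ab \<phi>(3)
    by (intro set_integral_pos_eq_integral borel_integrable_atLeastAtMost' continuous_on_mult cont cont_q\<eta>)
       auto
  moreover have "integral {a..b} (\<lambda>r. \<psi> r * primitive r) = - integral {a..b} (\<lambda>r. \<phi> r * (q r * \<eta> r))"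
    using ab \<phi>(2,3) cont_q\<eta> primitive_has_derivative
    by (intro integral_by_parts_vanishing cont) auto
  ultimately show ?thesis
    using weak ab by (simp add: integral_first_integral_mult_split cont)
qed

definition first_integral_value :: real where
  "first_integral_value =
     integral {1..2} (\<lambda>r. first_integral r * cutoff 1 2 0 r) / integral {1..2} (cutoff 1 2 0)"

text \<open>Subtracting a multiple of the fixed bump \<open>cutoff 1 2 0\<close> makes any \<open>\<psi>\<close> mean-zero.\<close>
lemma integral_first_integral_mult:
  fixes \<psi> :: "real \<Rightarrow> real"
  assumes smooth: "smooth \<psi>" and ab: "0 < a" "a \<le> b"
    and vanish: "\<And>x. x \<notin> {a<..<b} \<Longrightarrow> \<psi> x = 0"
  shows "integral {a..b} (\<lambda>r. first_integral r * \<psi> r) = first_integral_value * integral {a..b} \<psi>"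
proof -
  define A B where "A = min a 1" and "B = max b 2"
  define bump where "bump = cutoff 1 2 0"
  define c where "c = integral {a..b} \<psi> / integral {1..2} bump"
  have AB: "0 < A" "A \<le> a" "b \<le> B" "A \<le> 1" "2 \<le> B"
    using ab by (auto simp: A_def B_def)
  have cont: "continuous_on S \<psi>" "continuous_on S bump" for S
    unfolding bump_def using smooth smooth_cutoff by (auto intro: smooth_continuous_on)
  have mass: "0 < integral {1..2} bump"
    using integral_less_real[of 1 2 "\<lambda>_. 0" bump] cont cutoff_pos unfolding bump_def by auto
  have bump_vanish: "\<And>x. x \<notin> {1<..<2} \<Longrightarrow> bump x = 0"
    by (simp add: bump_def cutoff_eq_0)
  have "integral {A..B} \<psi> = integral {a..b} \<psi>" "integral {A..B} bump = integral {1..2} bump"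
    using AB ab vanish bump_vanish
    by (auto intro!: integral_superinterval_eq integrable_continuous_interval cont)
  with mass have "integral {A..B} (\<lambda>t. \<psi> t - c * bump t) = 0"
    by (subst integral_diff) (auto simp: c_def intro!: integrable_continuous_interval cont continuous_intros)
  then have "0 = integral {A..B} (\<lambda>r. first_integral r * (\<psi> r - c * bump r))"
    using smooth AB vanish bump_vanish unfolding bump_def
    by (intro integral_first_integral_mean_zero[symmetric] smooth_diff smooth_cmult smooth_cutoff) auto
  also have "\<dots> = integral {A..B} (\<lambda>r. first_integral r * \<psi> r) - c * integral {A..B} (\<lambda>r. first_integral r * bump r)"
  proof -
    have "(\<lambda>r. first_integral r * (\<psi> r - c * bump r))
        = (\<lambda>r. first_integral r * \<psi> r - c * (first_integral r * bump r))"
      by (simp add: fun_eq_iff algebra_simps)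
    moreover have "(\<lambda>r. first_integral r * \<psi> r) integrable_on {A..B}"
      "(\<lambda>r. first_integral r * bump r) integrable_on {A..B}"
      using AB cont by (auto intro!: integrable_on_first_integral_mult)
    ultimately show ?thesis
      by (simp add: integral_diff integrable_on_mult_right)
  qed
  also have "\<dots> = integral {a..b} (\<lambda>r. first_integral r * \<psi> r) - c * integral {1..2} (\<lambda>r. first_integral r * bump r)"
  proof -
    have "integral {A..B} (\<lambda>r. first_integral r * \<psi> r) = integral {a..b} (\<lambda>r. first_integral r * \<psi> r)"
      "integral {A..B} (\<lambda>r. first_integral r * bump r) = integral {1..2} (\<lambda>r. first_integral r * bump r)"
      using AB ab vanish bump_vanish cont by (auto intro!: integral_first_integral_restrict)
    then show ?thesis by simp
  qed
  finally show ?thesis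
    using mass by (simp add: c_def first_integral_value_def bump_def field_simps)
qed

text \<open>Testing with cutoffs of \<open>1/r\<close> on \<open>(x, y)\<close> and letting them tend to the indicator.\<close>
lemma integral_first_integral_div:
  assumes xy: "0 < x" "x < y"
  shows "integral {x..y} (\<lambda>r. first_integral r / r) = first_integral_value * integral {x..y} (\<lambda>r. 1 / r)"
proof -
  have cont_inv: "continuous_on {x..y} (\<lambda>r. 1 / r)"
    using xy by (intro continuous_intros) auto
  have "set_integrable lborel {x..y} (\<lambda>r. first_integral r * (1 / r))"
    using xy cont_inv by (intro set_integrable_first_integral_mult) auto
  then have si: "set_integrable lborel {x..y} (\<lambda>r. first_integral r / r)"
    by simp
  have abs_int: "(\<lambda>r. first_integral r / r) integrable_on {x..y}"
    "(\<lambda>r. \<bar>first_integral r / r\<bar>) integrable_on {x..y}"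
    using set_borel_integral_eq_integral(1)[OF si]
      set_borel_integral_eq_integral(1)[OF set_integrable_abs[OF si]] by simp_all
  have eq: "integral {x..y} (\<lambda>r. cutoff x y n r * (first_integral r / r))
      = first_integral_value * integral {x..y} (\<lambda>r. cutoff x y n r * (1 / r))" for n
  proof -
    have "integral {x..y} (\<lambda>r. first_integral r * cutoff_div x y n r)
        = first_integral_value * integral {x..y} (cutoff_div x y n)"
      using xy by (intro integral_first_integral_mult smooth_cutoff_div cutoff_div_eq_0) auto
    moreover have "integral {x..y} (\<lambda>r. first_integral r * cutoff_div x y n r)
        = integral {x..y} (\<lambda>r. cutoff x y n r * (first_integral r / r))"
      "integral {x..y} (cutoff_div x y n) = integral {x..y} (\<lambda>r. cutoff x y n r * (1 / r))"
      by (auto intro!: integral_cong simp: cutoff_div_eq)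
    ultimately show ?thesis
      by simp
  qed
  have cont_cutoff: "continuous_on {x..y} (cutoff x y n)" for n
    using smooth_cutoff by (rule smooth_continuous_on)
  have "(\<lambda>r. first_integral r * (cutoff x y n r * (1 / r))) integrable_on {x..y}" for n
    using xy cont_inv cont_cutoff by (intro integrable_on_first_integral_mult continuous_intros) auto
  then have "(\<lambda>r. cutoff x y n r * (first_integral r / r)) integrable_on {x..y}" for n
    by (simp add: mult_ac)
  with abs_int have "(\<lambda>n. integral {x..y} (\<lambda>r. cutoff x y n r * (first_integral r / r)))
      \<longlonglongrightarrow> integral {x..y} (\<lambda>r. first_integral r / r)"
    by (intro integral_cutoff_tendsto)
  moreover have "(\<lambda>n. integral {x..y} (\<lambda>r. cutoff x y n r * (first_integral r / r)))
      \<longlonglongrightarrow> first_integral_value * integral {x..y} (\<lambda>r. 1 / r)"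
    unfolding eq using xy cont_inv cont_cutoff
    by (intro tendsto_mult tendsto_const integral_cutoff_tendsto)
       (auto intro!: integrable_continuous_interval continuous_intros)
  ultimately show ?thesis
    by (rule LIMSEQ_unique)
qed

lemma solution_representation:
  assumes "0 < a" "a \<le> t"
  shows "\<eta> t = \<eta> a + first_integral_value * integral {a..t} (\<lambda>r. 1 / r)
      - integral {a..t} (\<lambda>r. primitive r / r)"
proof (cases "a = t")
  case False
  with assms have at: "0 < a" "a < t" by auto
  have cont: "continuous_on {a..t} (\<lambda>r. primitive r / r)"
    using at isCont_pos_imp_continuous_on[OF isCont_primitive] by (intro continuous_intros) auto
  have "integral {a..t} (\<lambda>r. first_integral r / r) = integral {a..t} (\<lambda>r. \<eta>' r + primitive r / r)"
    using at by (intro integral_cong) (auto simp: first_integral_def add_divide_distrib)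
  also have "\<dots> = integral {a..t} \<eta>' + integral {a..t} (\<lambda>r. primitive r / r)"
    using at cont by (intro integral_add integrable_on_deriv integrable_continuous_interval) auto
  finally show ?thesis
    using integral_first_integral_div[OF at] solution_diff_eq_integral[of a t] at by simp
qed simp

lemma solution_has_derivative:
  assumes r: "0 < r"
  shows "(\<eta> has_real_derivative (first_integral_value - primitive r) / r) (at r)"
proof -
  let ?a = "r / 2"
  have a: "0 < ?a" "?a < r"
    using r by auto
  have cont: "continuous_on {?a..} (\<lambda>r. 1 / r)" "continuous_on {?a..} (\<lambda>r. primitive r / r)"
    using a by (auto intro!: continuous_at_imp_continuous_on continuous_intros isCont_primitive)
  have "((\<lambda>t. \<eta> ?a + first_integral_value * integral {?a..t} (\<lambda>r. 1 / r)
      - integral {?a..t} (\<lambda>r. primitive r / r))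
      has_real_derivative (0 + first_integral_value * (1 / r) - primitive r / r)) (at r)"
    using integral_from_has_real_derivative[OF cont(1) a(2)] integral_from_has_real_derivative[OF cont(2) a(2)]
    by (intro DERIV_diff DERIV_add DERIV_const DERIV_cmult) auto
  then have "((\<lambda>t. \<eta> ?a + first_integral_value * integral {?a..t} (\<lambda>r. 1 / r)
      - integral {?a..t} (\<lambda>r. primitive r / r))
      has_real_derivative (first_integral_value - primitive r) / r) (at r)"
    by (simp add: diff_divide_distrib)
  then show ?thesis
  proof (rule has_field_derivative_transform_within_open[of _ _ _ "{?a<..}"])
    fix t assume "t \<in> {?a<..}"
    with solution_representation[of ?a t] a show "\<eta> ?a + first_integral_value * integral {?a..t} (\<lambda>r. 1 / r)
      - integral {?a..t} (\<lambda>r. primitive r / r) = \<eta> t"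
      by simp
  qed (use a in auto)
qed

lemma radial_system_solution: "radial_system q \<eta> (\<lambda>r. first_integral_value - primitive r)"
  unfolding radial_system_def
  using solution_has_derivative primitive_has_derivative
  by (auto intro!: derivative_eq_intros)

end

section \<open>The radial system\<close>

lemma radial_system_cmult:
  assumes "radial_system q u v"
  shows "radial_system q (\<lambda>r. c * u r) (\<lambda>r. c * v r)"
  unfolding radial_system_def
proof (intro allI impI conjI)
  fix r :: real assume "0 < r"
  with assms have "(u has_real_derivative v r / r) (at r)" "(v has_real_derivative - (q r * u r)) (at r)"
    by (auto simp: radial_system_def)
  from DERIV_cmult[OF this(1), of c] DERIV_cmult[OF this(2), of c]
  show "((\<lambda>r. c * u r) has_real_derivative c * v r / r) (at r)"
    "((\<lambda>r. c * v r) has_real_derivative - (q r * (c * u r))) (at r)"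
    by (simp_all add: algebra_simps)
qed

lemma radial_system_cong:
  assumes "radial_system q u v" "\<And>r. 0 < r \<Longrightarrow> u' r = u r" "\<And>r. 0 < r \<Longrightarrow> v' r = v r"
  shows "radial_system q u' v'"
  unfolding radial_system_def
proof (intro allI impI conjI)
  fix r :: real assume r: "0 < r"
  with assms(1) have "(u has_real_derivative v r / r) (at r)" "(v has_real_derivative - (q r * u r)) (at r)"
    by (auto simp: radial_system_def)
  with r assms(2,3) show "(u' has_real_derivative v' r / r) (at r)"
    "(v' has_real_derivative - (q r * u' r)) (at r)"
    by (auto intro: has_field_derivative_transform_within_open[of _ _ _ "{0<..}"])
qed

lemma radial_system_wronskian_constant:
  assumes "radial_system q u1 v1" "radial_system q u2 v2"
  obtains c where "\<And>r. 0 < r \<Longrightarrow> u1 r * v2 r - u2 r * v1 r = c"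
proof -
  have "\<exists>c. \<forall>r\<in>{0<..}. u1 r * v2 r - u2 r * v1 r = c"
  proof (rule has_field_derivative_zero_constant)
    fix r :: real assume "r \<in> {0<..}"
    with assms have "((\<lambda>r. u1 r * v2 r - u2 r * v1 r) has_real_derivative
        (v1 r / r * v2 r + - (q r * u2 r) * u1 r) - (v2 r / r * v1 r + - (q r * u1 r) * u2 r)) (at r)"
      unfolding radial_system_def by (intro DERIV_diff DERIV_mult) auto
    then show "((\<lambda>r. u1 r * v2 r - u2 r * v1 r) has_real_derivative 0) (at r within {0<..})"
      by (simp add: has_field_derivative_at_within algebra_simps)
  qed (rule convex_real_interval)
  with that show thesis by auto
qed

text \<open>The Wronskians of \<open>\<eta>\<close> with \<open>u1\<close> and \<open>u2\<close> are constant, and Cramer's rule recovers \<open>\<eta>\<close>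
  from them.\<close>
lemma radial_system_span:
  assumes s: "radial_system q \<eta> p" and s1: "radial_system q u1 v1" and s2: "radial_system q u2 v2"
    and w: "\<And>r. 0 < r \<Longrightarrow> u1 r * v2 r - u2 r * v1 r = w" and w0: "w \<noteq> 0"
  obtains A B where "\<And>r. 0 < r \<Longrightarrow> \<eta> r = A * u1 r + B * u2 r"
proof -
  obtain C1 where C1: "\<And>r. 0 < r \<Longrightarrow> \<eta> r * v1 r - u1 r * p r = C1"
    using radial_system_wronskian_constant[OF s s1] by blast
  obtain C2 where C2: "\<And>r. 0 < r \<Longrightarrow> \<eta> r * v2 r - u2 r * p r = C2"
    using radial_system_wronskian_constant[OF s s2] by blast
  have "\<eta> r = (C2 / w) * u1 r + (- C1 / w) * u2 r" if r: "0 < r" for r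
  proof -
    have "u1 r * C2 - u2 r * C1 = \<eta> r * w"
      unfolding C1[OF r, symmetric] C2[OF r, symmetric] w[OF r, symmetric] by (simp add: algebra_simps)
    with w0 show ?thesis
      by (simp add: field_simps)
  qed
  with that show thesis by blast
qed

lemma radial_system_reduction_of_order:
  assumes s: "radial_system q u v" and u: "\<And>r. 0 < r \<Longrightarrow> u r \<noteq> 0"
    and L: "\<And>r. 0 < r \<Longrightarrow> (L has_real_derivative 1 / (r * (u r)\<^sup>2)) (at r)"
  shows "radial_system q (\<lambda>r. u r * L r) (\<lambda>r. v r * L r + inverse (u r))"
  unfolding radial_system_def
proof (intro allI impI conjI)
  fix r :: real assume r: "0 < r"
  with s have du: "(u has_real_derivative v r / r) (at r)"
    and dv: "(v has_real_derivative - (q r * u r)) (at r)"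
    by (auto simp: radial_system_def)
  have "((\<lambda>r. u r * L r) has_real_derivative v r / r * L r + 1 / (r * (u r)\<^sup>2) * u r) (at r)"
    by (intro DERIV_mult du L r)
  then show "((\<lambda>r. u r * L r) has_real_derivative (v r * L r + inverse (u r)) / r) (at r)"
    using r u[OF r] by (simp add: field_simps power2_eq_square)
  have "((\<lambda>r. v r * L r + inverse (u r)) has_real_derivative
      - (q r * u r) * L r + 1 / (r * (u r)\<^sup>2) * v r + - (v r / r * inverse (u r ^ Suc (Suc 0)))) (at r)"
    by (intro DERIV_add DERIV_mult dv L r DERIV_inverse_fun[OF du u[OF r]])
  then show "((\<lambda>r. v r * L r + inverse (u r)) has_real_derivative - (q r * (u r * L r))) (at r)"
    using r u[OF r] by (simp add: field_simps power2_eq_square)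
qed

lemma wronskian_reduction_of_order:
  "u \<noteq> 0 \<Longrightarrow> u * (v * L + inverse u) - u * L * v = (1 :: real)"
  by (simp add: field_simps)

section \<open>Explicit solutions\<close>

text \<open>With \<open>r = \<surd>8 e\<^sup>s\<close>: \<open>pt_tanh r = tanh s\<close>, \<open>pt_sech2 r = sech\<^sup>2 s = r\<^sup>2 W\<^sup>1 r / 2\<close>, and
  \<open>jost \<kappa>\<close> is the Jost solution \<open>e\<^sup>\<kappa>\<^sup>s (tanh s - \<kappa>)\<close> of \<open>-\<eta>'' = (2 sech\<^sup>2 s - \<kappa>\<^sup>2) \<eta>\<close> up to the
  factor \<open>8\<^sup>\<kappa>\<^sup>/\<^sup>2\<close>; \<open>jost_flux \<kappa> = r \<cdot> (jost \<kappa>)'\<close>.\<close>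
definition pt_tanh :: "real \<Rightarrow> real" where
  "pt_tanh r = (r\<^sup>2 - 8) / (r\<^sup>2 + 8)"

definition pt_sech2 :: "real \<Rightarrow> real" where
  "pt_sech2 r = 32 * r\<^sup>2 / (r\<^sup>2 + 8)\<^sup>2"

definition jost :: "real \<Rightarrow> real \<Rightarrow> real" where
  "jost \<kappa> r = r powr \<kappa> * (pt_tanh r - \<kappa>)"

definition jost_flux :: "real \<Rightarrow> real \<Rightarrow> real" where
  "jost_flux \<kappa> r = r powr \<kappa> * (\<kappa> * (pt_tanh r - \<kappa>) + pt_sech2 r)"

lemma square_add_8_pos: "0 < (r\<^sup>2 + 8 :: real)"
  by (simp add: add_nonneg_pos)

lemma square_add_8_neq_0: "(r\<^sup>2 + 8 :: real) \<noteq> 0"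
  using square_add_8_pos[of r] by linarith

lemma pt_tanh_has_derivative: "(pt_tanh has_real_derivative 32 * r / (r\<^sup>2 + 8)\<^sup>2) (at r)"
proof -
  have "(pt_tanh has_real_derivative
      ((2 * r) * (r\<^sup>2 + 8) - (r\<^sup>2 - 8) * (2 * r)) / (r\<^sup>2 + 8)\<^sup>2) (at r)"
    unfolding pt_tanh_def[abs_def] using square_add_8_neq_0[of r]
    by (auto intro!: derivative_eq_intros simp: power2_eq_square)
  moreover have "(2 * r) * (r\<^sup>2 + 8) - (r\<^sup>2 - 8) * (2 * r) = 32 * r"
    by (simp add: algebra_simps power2_eq_square)
  ultimately show ?thesis by simp
qed

lemma pt_sech2_has_derivative:
  "(pt_sech2 has_real_derivative 64 * r * (8 - r\<^sup>2) / (r\<^sup>2 + 8) ^ 3) (at r)"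
proof -
  have "(pt_sech2 has_real_derivative
      ((32 * (2 * r)) * (r\<^sup>2 + 8)\<^sup>2 - 32 * r\<^sup>2 * (2 * (r\<^sup>2 + 8) * (2 * r))) / ((r\<^sup>2 + 8)\<^sup>2)\<^sup>2) (at r)"
    unfolding pt_sech2_def[abs_def] using square_add_8_neq_0[of r]
    by (auto intro!: derivative_eq_intros simp: power2_eq_square)
  moreover have "((32 * (2 * r)) * (r\<^sup>2 + 8)\<^sup>2 - 32 * r\<^sup>2 * (2 * (r\<^sup>2 + 8) * (2 * r))) / ((r\<^sup>2 + 8)\<^sup>2)\<^sup>2
      = 64 * r * (8 - r\<^sup>2) / (r\<^sup>2 + 8) ^ 3"
    using square_add_8_neq_0[of r] by (simp add: field_simps) algebra
  ultimately show ?thesis by simp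
qed

lemma pt_tanh_square_add_sech2: "(pt_tanh r)\<^sup>2 + pt_sech2 r = 1"
proof -
  have "(r\<^sup>2 - 8)\<^sup>2 + 32 * r\<^sup>2 = (r\<^sup>2 + 8)\<^sup>2"
    by (simp add: algebra_simps power2_eq_square)
  then show ?thesis
    using square_add_8_neq_0[of r] unfolding pt_tanh_def pt_sech2_def by (simp add: field_simps)
qed

lemma pt_W1_identities:
  "32 * r / (r\<^sup>2 + 8)\<^sup>2 = r * W1 r / 2"
  "64 * r * (8 - r\<^sup>2) / (r\<^sup>2 + 8) ^ 3 = - (r * W1 r * pt_tanh r)"
  "pt_sech2 r = r\<^sup>2 * W1 r / 2"
proof -
  have "D \<noteq> 0 \<Longrightarrow> 64 * r * (8 - x) / D ^ 3 = - (r * (64 / D\<^sup>2) * ((x - 8) / D))" for x D :: real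
    by (simp add: field_simps power2_eq_square power3_eq_cube)
  from this[OF square_add_8_neq_0, of "r\<^sup>2"]
  show "64 * r * (8 - r\<^sup>2) / (r\<^sup>2 + 8) ^ 3 = - (r * W1 r * pt_tanh r)"
    by (simp add: W1_def pt_tanh_def add.commute)
qed (simp_all add: W1_def pt_sech2_def add.commute)

lemma radial_system_jost: "radial_system (\<lambda>r. r * (W1 r + (- \<kappa>\<^sup>2) / r\<^sup>2)) (jost \<kappa>) (jost_flux \<kappa>)"
  unfolding radial_system_def
proof (intro allI impI conjI)
  fix r :: real assume r: "0 < r"
  have powr: "((\<lambda>r. r powr \<kappa>) has_real_derivative \<kappa> * r powr \<kappa> / r) (at r)"
    using has_real_derivative_powr[OF r, of \<kappa>] r by (simp add: powr_diff)
  have "(jost \<kappa> has_real_derivative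
      \<kappa> * r powr \<kappa> / r * (pt_tanh r - \<kappa>) + (32 * r / (r\<^sup>2 + 8)\<^sup>2 - 0) * r powr \<kappa>) (at r)"
    unfolding jost_def[abs_def] by (intro DERIV_mult powr DERIV_diff pt_tanh_has_derivative DERIV_const)
  then show "(jost \<kappa> has_real_derivative jost_flux \<kappa> r / r) (at r)"
    unfolding pt_W1_identities(1) using r by (simp add: jost_flux_def pt_W1_identities(3) field_simps power2_eq_square)
  have "(jost_flux \<kappa> has_real_derivative
      \<kappa> * r powr \<kappa> / r * (\<kappa> * (pt_tanh r - \<kappa>) + pt_sech2 r)
      + (\<kappa> * (32 * r / (r\<^sup>2 + 8)\<^sup>2 - 0) + 64 * r * (8 - r\<^sup>2) / (r\<^sup>2 + 8) ^ 3) * r powr \<kappa>) (at r)"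
    unfolding jost_flux_def[abs_def]
    by (intro DERIV_mult powr DERIV_add DERIV_cmult DERIV_diff pt_tanh_has_derivative DERIV_const
        pt_sech2_has_derivative)
  moreover have "\<kappa> * r powr \<kappa> / r * (\<kappa> * (pt_tanh r - \<kappa>) + pt_sech2 r)
      + (\<kappa> * (32 * r / (r\<^sup>2 + 8)\<^sup>2 - 0) + 64 * r * (8 - r\<^sup>2) / (r\<^sup>2 + 8) ^ 3) * r powr \<kappa>
      = - (r * (W1 r + (- \<kappa>\<^sup>2) / r\<^sup>2) * jost \<kappa> r)"
    unfolding pt_W1_identities using r by (simp add: jost_def field_simps power2_eq_square)
  ultimately show "(jost_flux \<kappa> has_real_derivative - (r * (W1 r + (- \<kappa>\<^sup>2) / r\<^sup>2) * jost \<kappa> r)) (at r)"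
    by simp
qed

lemma wronskian_jost:
  assumes "0 < r"
  shows "jost \<kappa> r * jost_flux (-\<kappa>) r - jost (-\<kappa>) r * jost_flux \<kappa> r = 2 * \<kappa> * (\<kappa>\<^sup>2 - 1)"
proof -
  have "r powr \<kappa> * r powr (-\<kappa>) = 1"
    using assms by (simp add: powr_add[symmetric])
  then have "jost \<kappa> r * jost_flux (-\<kappa>) r - jost (-\<kappa>) r * jost_flux \<kappa> r
      = (r powr \<kappa> * r powr (-\<kappa>)) * ((pt_tanh r - \<kappa>) * (- \<kappa> * (pt_tanh r + \<kappa>) + pt_sech2 r)
        - (pt_tanh r + \<kappa>) * (\<kappa> * (pt_tanh r - \<kappa>) + pt_sech2 r))"
    unfolding jost_def jost_flux_def by (simp add: algebra_simps)
  also have "\<dots> = - 2 * \<kappa> * ((pt_tanh r)\<^sup>2 + pt_sech2 r - \<kappa>\<^sup>2)"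
    using \<open>r powr \<kappa> * r powr (-\<kappa>) = 1\<close> by (simp add: algebra_simps power2_eq_square)
  also have "pt_sech2 r = 1 - (pt_tanh r)\<^sup>2"
    using pt_tanh_square_add_sech2[of r] by simp
  finally show ?thesis
    by (simp add: algebra_simps)
qed

definition deta1 :: "real \<Rightarrow> real" where
  "deta1 r = 4 * (8 - r\<^sup>2) / (8 + r\<^sup>2)\<^sup>2"

lemma eta1_has_derivative: "(eta1 has_real_derivative deta1 r) (at r)"
proof -
  have "(eta1 has_real_derivative (4 * (8 + r\<^sup>2) - 4 * r * (2 * r)) / (8 + r\<^sup>2)\<^sup>2) (at r)"
    unfolding eta1_def[abs_def] using square_add_8_neq_0[of r]
    by (auto intro!: derivative_eq_intros simp: power2_eq_square add.commute)
  moreover have "4 * (8 + r\<^sup>2) - 4 * r * (2 * r) = 4 * (8 - r\<^sup>2)"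
    by (simp add: algebra_simps power2_eq_square)
  ultimately show ?thesis
    by (simp add: deta1_def)
qed

lemma eta1_pos: "0 < r \<Longrightarrow> 0 < eta1 r"
  by (simp add: eta1_def add_pos_nonneg)

lemma eta1_eq_jost: "0 < r \<Longrightarrow> eta1 r = - 1 / 4 * jost 1 r"
  using square_add_8_neq_0[of r]
  by (simp add: jost_def pt_tanh_def eta1_def field_simps add.commute)

lemma radial_system_eta1: "radial_system (\<lambda>r. r * (W1 r + (- 1) / r\<^sup>2)) eta1 (\<lambda>r. r * deta1 r)"
proof -
  have jost1: "radial_system (\<lambda>r. r * (W1 r + (- 1) / r\<^sup>2)) (jost 1) (jost_flux 1)"
    using radial_system_jost[of 1] by simp
  have flux: "r * deta1 r = - 1 / 4 * jost_flux 1 r" if r: "0 < r" for r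
  proof -
    have "(jost 1 has_real_derivative jost_flux 1 r / r) (at r)"
      using jost1 r unfolding radial_system_def by blast
    from DERIV_cmult[OF this, of "- 1 / 4"]
    have "(eta1 has_real_derivative - 1 / 4 * (jost_flux 1 r / r)) (at r)"
      by (rule has_field_derivative_transform_within_open[of _ _ _ "{0<..}"])
         (use r eta1_eq_jost in auto)
    from DERIV_unique[OF eta1_has_derivative this] r show ?thesis
      by (simp add: field_simps)
  qed
  show ?thesis
    using radial_system_cmult[OF jost1, of "- 1 / 4"] eta1_eq_jost flux
    by (rule radial_system_cong)
qed

text \<open>The second solution \<open>eta1 \<cdot> log_factor\<close> comes from reduction of order.\<close>
definition log_factor :: "real \<Rightarrow> real" where
  "log_factor r = ln r - 2 / r\<^sup>2 + r\<^sup>2 / 32"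

lemma log_factor_has_derivative:
  assumes "0 < r"
  shows "(log_factor has_real_derivative 1 / (r * (eta1 r)\<^sup>2)) (at r)"
proof -
  have "(log_factor has_real_derivative 1 / r - (- 2 * (2 * r) / (r\<^sup>2)\<^sup>2) + 2 * r / 32) (at r)"
    unfolding log_factor_def[abs_def] using assms
    by (auto intro!: derivative_eq_intros simp: power2_eq_square)
  moreover have "1 / r - (- 2 * (2 * r) / (r\<^sup>2)\<^sup>2) + 2 * r / 32 = 1 / (r * (eta1 r)\<^sup>2)"
    using assms square_add_8_neq_0[of r]
    by (simp add: eta1_def field_simps power2_eq_square add.commute)
  ultimately show ?thesis by simp
qed

lemma radial_system_eta1_log:
  "radial_system (\<lambda>r. r * (W1 r + (- 1) / r\<^sup>2)) (\<lambda>r. eta1 r * log_factor r)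
     (\<lambda>r. r * deta1 r * log_factor r + inverse (eta1 r))"
proof (rule radial_system_reduction_of_order[OF radial_system_eta1])
  show "eta1 r \<noteq> 0" if "0 < r" for r
    using eta1_pos[OF that] by simp
qed (rule log_factor_has_derivative)

section \<open>Growth of solutions and the energy\<close>

lemma filterlim_abs_mult_at_top:
  fixes f g :: "'a \<Rightarrow> real"
  assumes f: "filterlim f at_top F" and g: "(g \<longlongrightarrow> c) F" and c: "c \<noteq> 0"
  shows "filterlim (\<lambda>x. \<bar>f x * g x\<bar>) at_top F"
proof -
  have "filterlim (\<lambda>x. \<bar>g x\<bar> * f x) at_top F"
    using c by (intro filterlim_tendsto_pos_mult_at_top[OF tendsto_rabs[OF g]] f) auto
  moreover have "\<forall>\<^sub>F x in F. 0 \<le> f x"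
    using f by (simp add: filterlim_at_top)
  then have "\<forall>\<^sub>F x in F. \<bar>g x\<bar> * f x = \<bar>f x * g x\<bar>"
    by eventually_elim (simp add: abs_mult)
  ultimately show ?thesis
    by (rule filterlim_mono_eventually[OF _ order_refl order_refl])
qed

lemma jost_combination_at_top:
  assumes \<kappa>: "0 < \<kappa>" "\<kappa> \<noteq> 1" and A: "A \<noteq> 0"
  shows "filterlim (\<lambda>r. \<bar>A * jost \<kappa> r + B * jost (-\<kappa>) r\<bar>) at_top at_top"
proof -
  have "(pt_tanh \<longlongrightarrow> 1) at_top" "((\<lambda>r::real. r powr (- (2 * \<kappa>))) \<longlongrightarrow> 0) at_top"
    using \<kappa> unfolding pt_tanh_def[abs_def] by real_asymp+
  then have "((\<lambda>r. A * (pt_tanh r - \<kappa>) + B * (r powr (- (2 * \<kappa>)) * (pt_tanh r + \<kappa>)))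
      \<longlongrightarrow> A * (1 - \<kappa>) + B * (0 * (1 + \<kappa>))) at_top"
    by (intro tendsto_intros)
  moreover have "filterlim (\<lambda>r::real. r powr \<kappa>) at_top at_top"
    using \<kappa> by real_asymp
  ultimately have "filterlim (\<lambda>r. \<bar>r powr \<kappa> *
      (A * (pt_tanh r - \<kappa>) + B * (r powr (- (2 * \<kappa>)) * (pt_tanh r + \<kappa>)))\<bar>) at_top at_top"
    using \<kappa> A by (intro filterlim_abs_mult_at_top[where c = "A * (1 - \<kappa>)"]) simp_all
  moreover have "\<forall>\<^sub>F r in at_top. \<bar>r powr \<kappa> * (A * (pt_tanh r - \<kappa>) + B * (r powr (- (2 * \<kappa>)) *
      (pt_tanh r + \<kappa>)))\<bar> = \<bar>A * jost \<kappa> r + B * jost (-\<kappa>) r\<bar>"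
    using eventually_gt_at_top[of 0]
    by eventually_elim (simp add: jost_def algebra_simps flip: powr_add)
  ultimately show ?thesis
    by (rule filterlim_mono_eventually[OF _ order_refl order_refl])
qed

lemma jost_combination_at_right_0:
  assumes \<kappa>: "0 < \<kappa>" "\<kappa> \<noteq> 1" and B: "B \<noteq> 0"
  shows "filterlim (\<lambda>r. \<bar>A * jost \<kappa> r + B * jost (-\<kappa>) r\<bar>) at_top (at_right 0)"
proof -
  have "(pt_tanh \<longlongrightarrow> -1) (at_right 0)" "((\<lambda>r::real. r powr (2 * \<kappa>)) \<longlongrightarrow> 0) (at_right 0)"
    using \<kappa> unfolding pt_tanh_def[abs_def] by real_asymp+
  then have "((\<lambda>r. B * (pt_tanh r + \<kappa>) + A * (r powr (2 * \<kappa>) * (pt_tanh r - \<kappa>)))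
      \<longlongrightarrow> B * (-1 + \<kappa>) + A * (0 * (-1 - \<kappa>))) (at_right 0)"
    by (intro tendsto_intros)
  moreover have "filterlim (\<lambda>r::real. r powr (-\<kappa>)) at_top (at_right 0)"
    using \<kappa> by real_asymp
  ultimately have "filterlim (\<lambda>r. \<bar>r powr (-\<kappa>) *
      (B * (pt_tanh r + \<kappa>) + A * (r powr (2 * \<kappa>) * (pt_tanh r - \<kappa>)))\<bar>) at_top (at_right 0)"
    using \<kappa> B by (intro filterlim_abs_mult_at_top[where c = "B * (\<kappa> - 1)"]) simp_all
  moreover have "\<forall>\<^sub>F r in at_right 0. \<bar>r powr (-\<kappa>) * (B * (pt_tanh r + \<kappa>) + A * (r powr (2 * \<kappa>) *
      (pt_tanh r - \<kappa>)))\<bar> = \<bar>A * jost \<kappa> r + B * jost (-\<kappa>) r\<bar>"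
    using eventually_at_right_less[of 0]
    by eventually_elim (simp add: jost_def algebra_simps flip: powr_add)
  ultimately show ?thesis
    by (rule filterlim_mono_eventually[OF _ order_refl order_refl])
qed

lemma eta1_combination_at_top:
  assumes B: "B \<noteq> 0"
  shows "filterlim (\<lambda>r. \<bar>A * eta1 r + B * (eta1 r * log_factor r)\<bar>) at_top at_top"
proof -
  have "((\<lambda>r::real. 4 / (8 + r\<^sup>2)) \<longlongrightarrow> 0) at_top"
    "((\<lambda>r. 4 * log_factor r / (8 + r\<^sup>2)) \<longlongrightarrow> 1 / 8) at_top"
    unfolding log_factor_def by real_asymp+
  from tendsto_add[OF tendsto_mult_left[OF this(1)] tendsto_mult_left[OF this(2)]]
  have "((\<lambda>r. A * (4 / (8 + r\<^sup>2)) + B * (4 * log_factor r / (8 + r\<^sup>2))) \<longlongrightarrow> A * 0 + B * (1/8)) at_top" .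
  from filterlim_abs_mult_at_top[OF filterlim_ident this] B
  have "filterlim (\<lambda>r. \<bar>r * (A * (4 / (8 + r\<^sup>2)) + B * (4 * log_factor r / (8 + r\<^sup>2)))\<bar>) at_top at_top"
    by simp
  moreover have "r * (A * (4 / (8 + r\<^sup>2)) + B * (4 * log_factor r / (8 + r\<^sup>2)))
      = A * eta1 r + B * (eta1 r * log_factor r)" for r
    by (simp add: eta1_def algebra_simps)
  ultimately show ?thesis
    by simp
qed

lemma integral_inverse_le_energy:
  fixes f :: "real \<Rightarrow> real"
  assumes f: "set_integrable lborel {0<..} (\<lambda>r. (f r)\<^sup>2 / r)"
    and RX: "0 < R" "R \<le> X" and big: "\<And>r. r \<in> {R..X} \<Longrightarrow> 1 \<le> \<bar>f r\<bar>"
  shows "ln X - ln R \<le> (LINT r:{0<..}|lborel. (f r)\<^sup>2 / r)"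
proof -
  have f_RX: "set_integrable lborel {R..X} (\<lambda>r. (f r)\<^sup>2 / r)"
    by (rule set_integrable_subset[OF f]) (use RX in auto)
  have "((\<lambda>r. 1 / r) has_integral (ln X - ln R)) {R..X}"
    using RX by (intro fundamental_theorem_of_calculus)
      (auto intro!: derivative_eq_intros simp: has_real_derivative_iff_has_vector_derivative[symmetric])
  then have "ln X - ln R = integral {R..X} (\<lambda>r. 1 / r)"
    by (simp add: integral_unique)
  also have "\<dots> \<le> integral {R..X} (\<lambda>r. (f r)\<^sup>2 / r)"
  proof (rule integral_le)
    show "(\<lambda>r. 1 / r) integrable_on {R..X}"
      using RX by (intro integrable_continuous_interval continuous_intros) auto
    show "(\<lambda>r. (f r)\<^sup>2 / r) integrable_on {R..X}"
      using set_borel_integral_eq_integral(1)[OF f_RX] .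
    fix r assume r: "r \<in> {R..X}"
    with big[OF r] have "1 \<le> (f r)\<^sup>2"
      by (metis abs_le_square_iff abs_one one_power2)
    with r RX show "1 / r \<le> (f r)\<^sup>2 / r"
      by (simp add: divide_right_mono)
  qed
  also have "\<dots> = (LINT r:{R..X}|lborel. (f r)\<^sup>2 / r)"
    using set_borel_integral_eq_integral(2)[OF f_RX] by simp
  also have "\<dots> \<le> (LINT r:{0<..}|lborel. (f r)\<^sup>2 / r)"
    using RX f f_RX unfolding set_lebesgue_integral_def set_integrable_def
    by (intro integral_mono) (auto simp: indicator_def)
  finally show ?thesis .
qed

text \<open>Finite energy \<open>\<integral>\<^sub>0\<^sup>\<infinity> \<eta>\<^sup>2 / r\<close> rules out \<open>|\<eta>| \<ge> 1\<close> on \<open>[R, \<infinity>)\<close> or on \<open>(0, R]\<close>, as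
  \<open>\<integral> 1 / r\<close> diverges at both ends.\<close>
lemma finite_energy_not_at_top:
  fixes f :: "real \<Rightarrow> real"
  assumes f: "set_integrable lborel {0<..} (\<lambda>r. (f r)\<^sup>2 / r)"
  shows "\<not> filterlim (\<lambda>r. \<bar>f r\<bar>) at_top at_top"
proof
  assume "filterlim (\<lambda>r. \<bar>f r\<bar>) at_top at_top"
  then obtain R0 where R0: "\<And>r. R0 \<le> r \<Longrightarrow> 1 \<le> \<bar>f r\<bar>"
    unfolding filterlim_at_top eventually_at_top_linorder by blast
  define R M where "R = max R0 1" and "M = (LINT r:{0<..}|lborel. (f r)\<^sup>2 / r)"
  define X where "X = R * exp (\<bar>M\<bar> + 1)"
  have "R0 \<le> R" "0 < R"
    by (simp_all add: R_def)
  then have RX: "0 < R" "R \<le> X"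
    by (simp_all add: X_def)
  have "ln X - ln R \<le> M"
    unfolding M_def using R0 \<open>R0 \<le> R\<close> by (intro integral_inverse_le_energy[OF f RX]) auto
  moreover have "ln X = ln R + (\<bar>M\<bar> + 1)"
    using RX unfolding X_def by (simp add: ln_mult)
  ultimately show False by simp
qed

lemma finite_energy_not_at_right_0:
  fixes f :: "real \<Rightarrow> real"
  assumes f: "set_integrable lborel {0<..} (\<lambda>r. (f r)\<^sup>2 / r)"
  shows "\<not> filterlim (\<lambda>r. \<bar>f r\<bar>) at_top (at_right 0)"
proof
  assume "filterlim (\<lambda>r. \<bar>f r\<bar>) at_top (at_right 0)"
  then obtain d where d: "0 < d" "\<And>r. 0 < r \<Longrightarrow> r < d \<Longrightarrow> 1 \<le> \<bar>f r\<bar>"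
    unfolding filterlim_at_top eventually_at_right_field by blast
  define X M where "X = d / 2" and "M = (LINT r:{0<..}|lborel. (f r)\<^sup>2 / r)"
  define R where "R = X * exp (- (\<bar>M\<bar> + 1))"
  have RX: "0 < R" "R \<le> X"
    using d by (auto simp: R_def X_def mult_le_cancel_left1)
  have "ln X - ln R \<le> M"
    unfolding M_def using d RX by (intro integral_inverse_le_energy[OF f RX]) (auto simp: X_def)
  moreover have "ln R = ln X - (\<bar>M\<bar> + 1)"
    using \<open>0 < d\<close> unfolding R_def X_def by (simp add: ln_mult ln_div)
  ultimately show False by simp
qed

section \<open>The eigenvalue problem\<close>

lemma isCont_W1: "isCont W1 r"
  unfolding W1_def using square_add_8_neq_0[of r] by (intro continuous_intros) (simp add: add.commute)

lemma isCont_potential: "0 < r \<Longrightarrow> isCont (\<lambda>r. r * (W1 r + \<beta> / r\<^sup>2)) r"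
  by (intro continuous_intros isCont_W1) auto

lemma weak_solution_radial_system:
  assumes "Drad \<eta> \<eta>'" "weak_solution \<beta> \<eta> \<eta>'"
  obtains v where "radial_system (\<lambda>r. r * (W1 r + \<beta> / r\<^sup>2)) \<eta> v"
proof -
  interpret radial_weak_solution "\<lambda>r. r * (W1 r + \<beta> / r\<^sup>2)" \<eta> \<eta>'
    using assms isCont_potential unfolding Drad_def weak_solution_def by unfold_locales auto
  from radial_system_solution that show thesis by blast
qed

lemma radial_system_weak_equation:
  assumes s: "radial_system q u v" and q: "\<And>r. 0 < r \<Longrightarrow> isCont q r"
    and u': "\<And>r. 0 < r \<Longrightarrow> r * u' r = v r" and \<phi>: "test_fun \<phi>"
  shows "(LINT r:{0<..}|lborel. r * u' r * deriv \<phi> r) = (LINT r:{0<..}|lborel. q r * u r * \<phi> r)"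
proof -
  obtain a b where ab: "0 < a" "a \<le> b" and vanish: "\<And>x. x \<notin> {a..b} \<Longrightarrow> \<phi> x = 0"
    and vanish': "\<And>x. x \<notin> {a..b} \<Longrightarrow> deriv \<phi> x = 0"
    and d\<phi>: "\<And>x. (\<phi> has_real_derivative deriv \<phi> x) (at x)"
    and cont\<phi>: "continuous_on UNIV \<phi>" "continuous_on UNIV (deriv \<phi>)"
    using test_funE[OF \<phi>] by blast
  define a' b' where "a' = a / 2" and "b' = b + 1"
  have a'b': "0 < a'" "a' \<le> b'" "a' < a" "b < b'"
    using ab by (auto simp: a'_def b'_def)
  have du: "(v has_real_derivative - (q r * u r)) (at r)" "isCont u r" "isCont v r" if "0 < r" for r
    using s that unfolding radial_system_def by (auto intro: DERIV_isCont)
  have cont: "continuous_on {a'..b'} v" "continuous_on {a'..b'} (\<lambda>r. q r * u r)"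
    using a'b' du q by (auto intro!: continuous_at_imp_continuous_on continuous_intros)
  have cont': "continuous_on {a'..b'} \<phi>" "continuous_on {a'..b'} (deriv \<phi>)"
    using cont\<phi> by (auto intro: continuous_on_subset)
  have "(LINT r:{0<..}|lborel. r * u' r * deriv \<phi> r) = integral {a'..b'} (\<lambda>r. deriv \<phi> r * v r)"
    using cont cont' a'b' vanish' u'
    by (intro set_integral_pos_eq_integral borel_integrable_atLeastAtMost' continuous_intros)
       (auto simp: mult.commute)
  also have "\<dots> = - integral {a'..b'} (\<lambda>r. \<phi> r * - (q r * u r))"
    using a'b' du cont' vanish continuous_on_minus[OF cont(2)]
    by (intro integral_by_parts_vanishing d\<phi>) auto
  also have "\<dots> = integral {a'..b'} (\<lambda>r. \<phi> r * (q r * u r))"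
    by (simp add: integral_neg)
  also have "\<dots> = (LINT r:{0<..}|lborel. q r * u r * \<phi> r)"
  proof (rule set_integral_pos_eq_integral[symmetric])
    show "set_integrable lborel {a'..b'} (\<lambda>r. \<phi> r * (q r * u r))"
      by (rule borel_integrable_atLeastAtMost'[OF continuous_on_mult[OF cont'(1) cont(2)]])
  qed (use a'b' vanish in auto)
  finally show ?thesis .
qed

lemma weak_solution_eta1: "weak_solution (-1) eta1 deta1"
  unfolding weak_solution_def
proof (intro allI impI)
  fix \<phi> assume "test_fun \<phi>"
  from radial_system_weak_equation[OF radial_system_eta1 isCont_potential _ this, of deta1]
  show "(LINT r:{0<..}|lborel. r * deta1 r * deriv \<phi> r) =
      (LINT r:{0<..}|lborel. r * (W1 r + -1 / r\<^sup>2) * eta1 r * \<phi> r)"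
    by simp
qed

lemma continuous_on_deta1: "continuous_on S deta1"
  unfolding deta1_def[abs_def] using square_add_8_neq_0
  by (intro continuous_intros) (simp add: add.commute)

lemma weak_deriv_eta1: "weak_deriv eta1 deta1"
  unfolding weak_deriv_def
proof (intro allI impI conjI)
  fix a b :: real assume "0 < a" "a \<le> b"
  show si: "set_integrable lborel {a..b} deta1"
    by (intro borel_integrable_atLeastAtMost' continuous_on_deta1)
  have "(deta1 has_integral (eta1 b - eta1 a)) {a..b}"
    using \<open>a \<le> b\<close> eta1_has_derivative
    by (intro fundamental_theorem_of_calculus)
       (auto intro: has_field_derivative_at_within simp: has_real_derivative_iff_has_vector_derivative[symmetric])
  then show "eta1 b - eta1 a = (LINT t:{a..b}|lborel. deta1 t)"
    using set_borel_integral_eq_integral(2)[OF si] by (simp add: integral_unique)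
qed

lemma eta1_energy_eq: "(eta1 r)\<^sup>2 / r = 16 * r / (8 + r\<^sup>2)\<^sup>2"
  by (cases "r = 0") (simp_all add: eta1_def power_divide power2_eq_square)

lemma set_integrable_eta1_energy: "set_integrable lborel {0<..} (\<lambda>r. (eta1 r)\<^sup>2 / r)"
proof -
  have "set_integrable lborel (einterval 0 \<infinity>) (\<lambda>r. 16 * r / (8 + r\<^sup>2)\<^sup>2)"
  proof (rule interval_integral_FTC_nonneg(1)[where F = "\<lambda>r. - 8 / (8 + r\<^sup>2)" and A = "-1" and B = 0])
    fix x :: real
    have "8 + x\<^sup>2 \<noteq> 0"
      using square_add_8_neq_0[of x] by (simp add: add.commute)
    then show "((\<lambda>r. - 8 / (8 + r\<^sup>2)) has_real_derivative 16 * x / (8 + x\<^sup>2)\<^sup>2) (at x)"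
      "isCont (\<lambda>r. 16 * r / (8 + r\<^sup>2)\<^sup>2) x"
      by (auto intro!: derivative_eq_intros continuous_intros simp: power2_eq_square)
  next
    show "(((\<lambda>r. - 8 / (8 + r\<^sup>2)) \<circ> real_of_ereal) \<longlongrightarrow> -1) (at_right 0)"
      unfolding zero_ereal_def ereal_tendsto_simps by real_asymp
    show "(((\<lambda>r. - 8 / (8 + r\<^sup>2)) \<circ> real_of_ereal) \<longlongrightarrow> 0) (at_left \<infinity>)"
      unfolding ereal_tendsto_simps by real_asymp
  qed (auto intro: AE_I2)
  then show ?thesis
    by (simp add: zero_ereal_def eta1_energy_eq)
qed

lemma deta1_energy_le:
  assumes "0 < r"
  shows "r * (deta1 r)\<^sup>2 \<le> (eta1 r)\<^sup>2 / r"
proof -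
  have ne: "8 + r\<^sup>2 \<noteq> 0"
    using square_add_8_neq_0[of r] by (simp add: add.commute)
  have "(deta1 r)\<^sup>2 = 16 * (8 - r\<^sup>2)\<^sup>2 / ((8 + r\<^sup>2)\<^sup>2)\<^sup>2"
    by (simp add: deta1_def power_divide power_mult_distrib) (simp add: power2_eq_square algebra_simps)
  also have "\<dots> \<le> 16 * (8 + r\<^sup>2)\<^sup>2 / ((8 + r\<^sup>2)\<^sup>2)\<^sup>2"
  proof -
    have "(8 - r\<^sup>2)\<^sup>2 \<le> (8 + r\<^sup>2)\<^sup>2"
      by (simp add: power2_eq_square algebra_simps)
    then show ?thesis
      by (intro divide_right_mono mult_left_mono) simp_all
  qed
  also have "\<dots> = 16 / (8 + r\<^sup>2)\<^sup>2"
    using ne by (simp add: power2_eq_square)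
  finally have "r * (deta1 r)\<^sup>2 \<le> r * (16 / (8 + r\<^sup>2)\<^sup>2)"
    using assms by (intro mult_left_mono) auto
  then show ?thesis
    by (simp add: eta1_energy_eq mult.commute)
qed

lemma Drad_eta1: "Drad eta1 deta1"
  unfolding Drad_def
proof (intro conjI weak_deriv_eta1 set_integrable_eta1_energy)
  show "set_integrable lborel {0<..} (\<lambda>r. r * (deta1 r)\<^sup>2)"
  proof (rule set_integrable_bound[OF set_integrable_eta1_energy])
    show "set_borel_measurable lborel {0<..} (\<lambda>r. r * (deta1 r)\<^sup>2)"
      unfolding set_borel_measurable_def
      using borel_measurable_continuous_on_indicator[of "{0<..}" "\<lambda>r. r * (deta1 r)\<^sup>2"]
      by (simp add: continuous_intros continuous_on_deta1)
    show "AE x in lborel. x \<in> {0<..} \<longrightarrow> norm (x * (deta1 x)\<^sup>2) \<le> norm ((eta1 x)\<^sup>2 / x)"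
      using deta1_energy_le by (intro AE_I2) auto
  qed
qed

lemma finite_energy_combination:
  assumes "Drad \<eta> \<eta>'" and eq: "\<And>r. 0 < r \<Longrightarrow> \<eta> r = g r"
  shows "\<not> filterlim (\<lambda>r. \<bar>g r\<bar>) at_top at_top" "\<not> filterlim (\<lambda>r. \<bar>g r\<bar>) at_top (at_right 0)"
proof -
  have energy: "set_integrable lborel {0<..} (\<lambda>r. (\<eta> r)\<^sup>2 / r)"
    using assms(1) by (simp add: Drad_def)
  have "\<forall>\<^sub>F r in at_top. \<bar>g r\<bar> = \<bar>\<eta> r\<bar>"
    using eventually_gt_at_top[of 0] by eventually_elim (simp add: eq)
  from filterlim_mono_eventually[OF _ order_refl order_refl this] finite_energy_not_at_top[OF energy]
  show "\<not> filterlim (\<lambda>r. \<bar>g r\<bar>) at_top at_top"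
    by blast
  have "\<forall>\<^sub>F r in at_right 0. \<bar>g r\<bar> = \<bar>\<eta> r\<bar>"
    using eventually_at_right_less[of 0] by eventually_elim (simp add: eq)
  from filterlim_mono_eventually[OF _ order_refl order_refl this] finite_energy_not_at_right_0[OF energy]
  show "\<not> filterlim (\<lambda>r. \<bar>g r\<bar>) at_top (at_right 0)"
    by blast
qed

lemma eigenfunction_vanishes:
  assumes D: "Drad \<eta> \<eta>'" and W: "weak_solution \<beta> \<eta> \<eta>'" and \<beta>: "\<beta> < 0" "\<beta> \<noteq> -1"
    and r: "0 < r"
  shows "\<eta> r = 0"
proof -
  obtain v where s: "radial_system (\<lambda>r. r * (W1 r + \<beta> / r\<^sup>2)) \<eta> v"
    using weak_solution_radial_system[OF D W] .
  define \<kappa> where "\<kappa> = sqrt (- \<beta>)"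
  have \<kappa>: "0 < \<kappa>" "\<kappa> \<noteq> 1" and \<beta>_eq: "\<beta> = - \<kappa>\<^sup>2"
    using \<beta> by (auto simp: \<kappa>_def real_sqrt_eq_1_iff)
  have jost: "radial_system (\<lambda>r. r * (W1 r + \<beta> / r\<^sup>2)) (jost \<kappa>) (jost_flux \<kappa>)"
    "radial_system (\<lambda>r. r * (W1 r + \<beta> / r\<^sup>2)) (jost (-\<kappa>)) (jost_flux (-\<kappa>))"
    using radial_system_jost[of \<kappa>] radial_system_jost[of "-\<kappa>"] \<beta>_eq by simp_all
  have "2 * \<kappa> * (\<kappa>\<^sup>2 - 1) \<noteq> 0"
    using \<kappa> by (simp add: power2_eq_1_iff)
  then obtain A B where AB: "\<And>r. 0 < r \<Longrightarrow> \<eta> r = A * jost \<kappa> r + B * jost (-\<kappa>) r"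
    using radial_system_span[OF s jost wronskian_jost] by blast
  have "A = 0"
    using jost_combination_at_top[OF \<kappa>] finite_energy_combination(1)[OF D AB] by blast
  moreover have "B = 0"
    using jost_combination_at_right_0[OF \<kappa>] finite_energy_combination(2)[OF D AB] by blast
  ultimately show ?thesis
    using AB[OF r] by simp
qed

lemma eigenfunction_minus_one:
  assumes D: "Drad \<eta> \<eta>'" and W: "weak_solution (-1) \<eta> \<eta>'"
  obtains c where "\<And>r. 0 < r \<Longrightarrow> \<eta> r = c * eta1 r"
proof -
  obtain v where s: "radial_system (\<lambda>r. r * (W1 r + (- 1) / r\<^sup>2)) \<eta> v"
    using weak_solution_radial_system[OF D W] .
  obtain A B where AB: "\<And>r. 0 < r \<Longrightarrow> \<eta> r = A * eta1 r + B * (eta1 r * log_factor r)"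
  proof (rule radial_system_span[OF s radial_system_eta1 radial_system_eta1_log])
    show "eta1 r * (r * deta1 r * log_factor r + inverse (eta1 r)) - eta1 r * log_factor r * (r * deta1 r) = 1"
      if "0 < r" for r
      using eta1_pos[OF that] by (intro wronskian_reduction_of_order) simp
  qed auto
  have "B = 0"
    using eta1_combination_at_top finite_energy_combination(1)[OF D AB] by blast
  with AB show thesis
    by (intro that[of A]) simp
qed

theorem propositionA4:
  shows "(\<forall>\<beta>::real. \<beta> < 0 \<longrightarrow> (eigenvalue \<beta> \<longleftrightarrow> \<beta> = -1))
    \<and> (\<exists>\<eta>'. Drad eta1 \<eta>' \<and> weak_solution (-1) eta1 \<eta>')
    \<and> (\<forall>\<eta> \<eta>'. Drad \<eta> \<eta>' \<and> weak_solution (-1) \<eta> \<eta>' \<longrightarrow>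
          (\<exists>c::real. \<forall>r>0. \<eta> r = c * eta1 r))"
proof (intro conjI allI impI)
  fix \<beta> :: real assume "\<beta> < 0"
  have "eta1 1 \<noteq> 0"
    by (simp add: eta1_def)
  with \<open>\<beta> < 0\<close> show "eigenvalue \<beta> \<longleftrightarrow> \<beta> = -1"
    unfolding eigenvalue_def using eigenfunction_vanishes Drad_eta1 weak_solution_eta1
    by (metis zero_less_one)
next
  show "\<exists>\<eta>'. Drad eta1 \<eta>' \<and> weak_solution (-1) eta1 \<eta>'"
    using Drad_eta1 weak_solution_eta1 by blast
next
  fix \<eta> \<eta>' :: "real \<Rightarrow> real"
  assume "Drad \<eta> \<eta>' \<and> weak_solution (-1) \<eta> \<eta>'"
  then show "\<exists>c. \<forall>r>0. \<eta> r = c * eta1 r"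
    by (metis eigenfunction_minus_one)
qed

end
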